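(* Let $\lambda/\mu$ be a border strip, let $P_{\lambda/\mu}=P_{\lambda/\mu}(\mathbf{p})$ be a mobile poset with underlying border strip $\lambda/\mu$, and let $\omega$ be a labeling of it that is a reversed Schur labeling on the border-strip cells and natural on the hanging $d$-complete posets (i.e. $\omega(x)<\omega(y)$ whenever $y$ covers $x$ and $x$ lies in a hanging $d$-complete poset). Then $$e_q^{\mathrm{maj}}(P_{\lambda/\mu},\omega)=\sum_{\mu\to\nu} q^{|P_{\lambda/\nu_1}|}\, e_q^{\mathrm{maj}}(P_{\lambda/\nu},\omega_\nu),$$ where the sum is over all inner corners $u$ of $\lambda/\mu$ (with $\nu$ the partition with $[\nu]=[\mu]\cup\{u\}$), $P_{\lambda/\nu}$ is the poset $P_{\lambda/\mu}$ with the element $u$ removed, $\omega_\nu$ is the restriction of $\omega$ to $P_{\lambda/\nu}$, and $P_{\lambda/\nu_1}$ is the subposet consisting of the border-strip cells of content less than $c(u)$ together with all elements of the $d$-complete posets hanging from those cells.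
   Context: English notation: $[\lambda]=\{(i,j):1\le i\le\ell(\lambda),1\le j\le\lambda_i\}$, $[\lambda/\mu]=[\lambda]\setminus[\mu]$, content $c(i,j)=j-i$. A border strip is a skew shape whose diagram is edge-connected with no $2\times2$ square. The border strip poset on $[\lambda/\mu]$ has $(i,j)\le(i',j')$ iff $i\ge i'$ and $j\ge j'$; an inner corner is a cell $u\in[\lambda/\mu]$ with $[\mu]\cup\{u\}$ a partition diagram (these are maximal). A mobile poset is obtained by choosing for each cell $x$ a finite (possibly empty) family of disjoint connected $d$-complete posets (Proctor), each with a unique maximal element, and letting $x$ cover each of these maximal elements. A reversed Schur labeling on the border strip: listing strip cells in increasing order of content, their labels strictly decrease. For a poset $R$ with injective labeling $\omega_R$ into $\mathbb{Z}$ and $|R|=r$, each order-preserving bijection $g:R\to[r]$ gives the word $\sigma=\omega_R\circ g^{-1}$; $\mathrm{maj}(\sigma)=\sum_{i:\sigma_i>\sigma_{i+1}}i$, and $e_q^{\mathrm{maj}}(R,\omega_R)=\sum_g q^{\mathrm{maj}(\omega_R\circ g^{-1})}$. *)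

theory Defs
  imports Main "HOL-Library.FuncSet"
begin

definition is_partition :: "nat list \<Rightarrow> bool" where
  "is_partition la \<longleftrightarrow> sorted_wrt (\<ge>) la \<and> 0 \<notin> set la"

definition diagram :: "nat list \<Rightarrow> (nat \<times> nat) set" where
  "diagram la = {(i, j). 1 \<le> i \<and> i \<le> length la \<and> 1 \<le> j \<and> j \<le> la ! (i - 1)}"

definition skew :: "nat list \<Rightarrow> nat list \<Rightarrow> (nat \<times> nat) set" where
  "skew la mu = diagram la - diagram mu"

definition content :: "nat \<times> nat \<Rightarrow> int" where
  "content c = int (snd c) - int (fst c)"

definition cell_adj :: "nat \<times> nat \<Rightarrow> nat \<times> nat \<Rightarrow> bool" where
  "cell_adj c d \<longleftrightarrow>
     (fst c = fst d \<and> (snd d = snd c + 1 \<or> snd c = snd d + 1)) \<or>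
     (snd c = snd d \<and> (fst d = fst c + 1 \<or> fst c = fst d + 1))"

definition edge_connected :: "(nat \<times> nat) set \<Rightarrow> bool" where
  "edge_connected S \<longleftrightarrow>
     (\<forall>c\<in>S. \<forall>d\<in>S. (c, d) \<in> {(x, y). x \<in> S \<and> y \<in> S \<and> cell_adj x y}\<^sup>*)"

definition border_strip :: "nat list \<Rightarrow> nat list \<Rightarrow> bool" where
  "border_strip la mu \<longleftrightarrow>
     is_partition la \<and> is_partition mu \<and> diagram mu \<subseteq> diagram la \<and>
     skew la mu \<noteq> {} \<and> edge_connected (skew la mu) \<and>
     \<not> (\<exists>i j. {(i, j), (i + 1, j), (i, j + 1), (i + 1, j + 1)} \<subseteq> skew la mu)"

definition inner_corners :: "nat list \<Rightarrow> nat list \<Rightarrow> (nat \<times> nat) set" where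
  "inner_corners la mu =
     {u \<in> skew la mu. \<exists>nu. is_partition nu \<and> diagram nu = insert u (diagram mu)}"

definition bs_le :: "nat \<times> nat \<Rightarrow> nat \<times> nat \<Rightarrow> bool" where
  "bs_le c d \<longleftrightarrow> fst d \<le> fst c \<and> snd d \<le> snd c"

definition poset_on :: "'a set \<Rightarrow> ('a \<Rightarrow> 'a \<Rightarrow> bool) \<Rightarrow> bool" where
  "poset_on A le \<longleftrightarrow> (\<forall>x\<in>A. le x x) \<and>
     (\<forall>x\<in>A. \<forall>y\<in>A. le x y \<and> le y x \<longrightarrow> x = y) \<and>
     (\<forall>x\<in>A. \<forall>y\<in>A. \<forall>z\<in>A. le x y \<and> le y z \<longrightarrow> le x z)"

definition covers :: "'a set \<Rightarrow> ('a \<Rightarrow> 'a \<Rightarrow> bool) \<Rightarrow> 'a \<Rightarrow> 'a \<Rightarrow> bool" where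
  "covers A le x y \<longleftrightarrow> x \<in> A \<and> y \<in> A \<and> le x y \<and> x \<noteq> y \<and>
     \<not> (\<exists>z\<in>A. le x z \<and> le z y \<and> z \<noteq> x \<and> z \<noteq> y)"

definition maximals :: "'a set \<Rightarrow> ('a \<Rightarrow> 'a \<Rightarrow> bool) \<Rightarrow> 'a set" where
  "maximals I le = {x \<in> I. \<forall>y\<in>I. le x y \<longrightarrow> y = x}"

definition minimals :: "'a set \<Rightarrow> ('a \<Rightarrow> 'a \<Rightarrow> bool) \<Rightarrow> 'a set" where
  "minimals I le = {x \<in> I. \<forall>y\<in>I. le y x \<longrightarrow> y = x}"

definition order_iso :: "'a set \<Rightarrow> ('a \<Rightarrow> 'a \<Rightarrow> bool) \<Rightarrow> 'b set \<Rightarrow> ('b \<Rightarrow> 'b \<Rightarrow> bool) \<Rightarrow> bool" where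
  "order_iso A le B le' \<longleftrightarrow>
     (\<exists>f. bij_betw f A B \<and> (\<forall>x\<in>A. \<forall>y\<in>A. le x y \<longleftrightarrow> le' (f x) (f y)))"

definition convex_in :: "'a set \<Rightarrow> ('a \<Rightarrow> 'a \<Rightarrow> bool) \<Rightarrow> 'a set \<Rightarrow> bool" where
  "convex_in A le I \<longleftrightarrow> I \<subseteq> A \<and> (\<forall>x\<in>I. \<forall>z\<in>I. \<forall>y\<in>A. le x y \<and> le y z \<longrightarrow> y \<in> I)"

definition interval_in :: "'a set \<Rightarrow> ('a \<Rightarrow> 'a \<Rightarrow> bool) \<Rightarrow> 'a \<Rightarrow> 'a \<Rightarrow> 'a set" where
  "interval_in A le w z = {y \<in> A. le w y \<and> le y z}"

text \<open>The double-tailed diamond d_k(1), k >= 3, on {0..<2k-2}: a chain 0..k-3, two incomparable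
  elements k-2 and k-1, then a chain k..2k-3. d_k^-(1) is the same with the top 2k-3 removed,
  i.e. carrier {0..<2k-3}.\<close>
definition dk_le :: "nat \<Rightarrow> nat \<Rightarrow> nat \<Rightarrow> bool" where
  "dk_le k a b \<longleftrightarrow> a = b \<or> (a < b \<and> \<not> (a = k - 2 \<and> b = k - 1))"

definition dk_interval :: "'a set \<Rightarrow> ('a \<Rightarrow> 'a \<Rightarrow> bool) \<Rightarrow> nat \<Rightarrow> 'a set \<Rightarrow> bool" where
  "dk_interval A le k I \<longleftrightarrow>
     (\<exists>w\<in>A. \<exists>z\<in>A. I = interval_in A le w z) \<and> order_iso I le {0..<2*k-2} (dk_le k)"

definition dk_minus_convex :: "'a set \<Rightarrow> ('a \<Rightarrow> 'a \<Rightarrow> bool) \<Rightarrow> nat \<Rightarrow> 'a set \<Rightarrow> bool" where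
  "dk_minus_convex A le k I \<longleftrightarrow> convex_in A le I \<and> order_iso I le {0..<2*k-3} (dk_le k)"

definition d_complete :: "'a set \<Rightarrow> ('a \<Rightarrow> 'a \<Rightarrow> bool) \<Rightarrow> bool" where
  "d_complete A le \<longleftrightarrow> finite A \<and> poset_on A le \<and>
     (\<forall>k\<ge>3.
       (\<forall>I. dk_minus_convex A le k I \<longrightarrow>
          (\<exists>v\<in>A. (\<forall>m\<in>maximals I le. covers A le m v) \<and> dk_interval A le k (insert v I))) \<and>
       (\<forall>w\<in>A. \<forall>z\<in>A. dk_interval A le k (interval_in A le w z) \<longrightarrow>
          (\<forall>y\<in>A. covers A le y z \<longrightarrow> y \<in> interval_in A le w z)) \<and>
       (\<forall>I I'. dk_minus_convex A le k I \<and> dk_minus_convex A le k I' \<and>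
          I - minimals I le = I' - minimals I' le \<longrightarrow> I = I'))"

text \<open>Elements are Inl c (c a cell of the border strip) or Inr b (b an element of the
  hanging d-complete posets). H with order hle is the disjoint union of the hanging posets;
  its connected components (w.r.t. comparability) are the individual hanging posets, and
  att b is the cell from which the component of b hangs (the cell covering its maximum).\<close>

definition hang_comp :: "'b set \<Rightarrow> ('b \<Rightarrow> 'b \<Rightarrow> bool) \<Rightarrow> 'b \<Rightarrow> 'b set" where
  "hang_comp H hle b =
     {b' \<in> H. (b, b') \<in> {(x, y). x \<in> H \<and> y \<in> H \<and> (hle x y \<or> hle y x)}\<^sup>*}"

definition mobile_data ::
  "(nat \<times> nat) set \<Rightarrow> 'b set \<Rightarrow> ('b \<Rightarrow> 'b \<Rightarrow> bool) \<Rightarrow> ('b \<Rightarrow> nat \<times> nat) \<Rightarrow> bool" where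
  "mobile_data S H hle att \<longleftrightarrow> finite H \<and> poset_on H hle \<and>
     (\<forall>b\<in>H. att b \<in> S) \<and>
     (\<forall>b\<in>H. \<forall>b'\<in>H. hle b b' \<longrightarrow> att b = att b') \<and>
     (\<forall>b\<in>H. d_complete (hang_comp H hle b) hle \<and>
             (\<exists>m. maximals (hang_comp H hle b) hle = {m}))"

definition mob_carrier :: "(nat \<times> nat) set \<Rightarrow> 'b set \<Rightarrow> ((nat \<times> nat) + 'b) set" where
  "mob_carrier S H = Inl ` S \<union> Inr ` H"

definition mob_le ::
  "('b \<Rightarrow> 'b \<Rightarrow> bool) \<Rightarrow> ('b \<Rightarrow> nat \<times> nat) \<Rightarrow> (nat \<times> nat) + 'b \<Rightarrow> (nat \<times> nat) + 'b \<Rightarrow> bool" where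
  "mob_le hle att x y = (case (x, y) of
       (Inl c, Inl d) \<Rightarrow> bs_le c d
     | (Inr b, Inr b') \<Rightarrow> hle b b'
     | (Inr b, Inl c) \<Rightarrow> bs_le (att b) c
     | (Inl c, Inr b) \<Rightarrow> False)"

definition lin_exts :: "'a set \<Rightarrow> ('a \<Rightarrow> 'a \<Rightarrow> bool) \<Rightarrow> ('a \<Rightarrow> nat) set" where
  "lin_exts R le = {g \<in> extensional R. bij_betw g R {1..card R} \<and>
       (\<forall>x\<in>R. \<forall>y\<in>R. le x y \<longrightarrow> g x \<le> g y)}"

text \<open>maj of the word sigma = omega o g^-1, sigma_i = omega (g^-1 i).\<close>
definition maj_of :: "'a set \<Rightarrow> ('a \<Rightarrow> int) \<Rightarrow> ('a \<Rightarrow> nat) \<Rightarrow> nat" where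
  "maj_of R w g = (\<Sum>i\<in>{i. 1 \<le> i \<and> i < card R \<and>
       w (inv_into R g (i + 1)) < w (inv_into R g i)}. i)"

definition emaj :: "'a set \<Rightarrow> ('a \<Rightarrow> 'a \<Rightarrow> bool) \<Rightarrow> ('a \<Rightarrow> int) \<Rightarrow> 'c::comm_semiring_1 \<Rightarrow> 'c" where
  "emaj R le w q = (\<Sum>g\<in>lin_exts R le. q ^ maj_of R w g)"

end

theory Submission
  imports Defs
begin

text \<open>Count the (P, \<omega>)-partitions of the mobile poset P that vanish somewhere, by their sum N.
  By Stanley's fundamental lemma they correspond to pairs of a linear extension \<sigma> and a
  sequence N_1 \<ge> \<dots> \<ge> N_n = 0 dropping strictly at the descents of \<sigma>, so their
  generating function is the sum over \<sigma> of q^maj(\<sigma>) / ((1 - q) \<dots> (1 - q^(n-1))).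
  Such a partition also vanishes at an inner corner; at the one of least content, u, it is
  positive on P_{\<lambda>/\<nu>_1}, and lowering it by one there gives an arbitrary (P - u, \<omega>)-partition,
  because P_{\<lambda>/\<nu>_1} is incomparable with the rest of P - u. So the generating function is
  also the sum over u and over linear extensions \<sigma>' of P - u of
  q^(|P_{\<lambda>/\<nu>_1}| + maj(\<sigma>')) / ((1 - q) \<dots> (1 - q^(n-1))).
  The common denominator is cancelled by comparing coefficients, a triangular system.\<close>

section \<open>(P, \<omega>)-partitions and Stanley's fundamental lemma\<close>

lemma rank_less_iff:
  fixes r :: "'a \<Rightarrow> 'a \<Rightarrow> bool"
  assumes "finite R"
    and irrefl: "\<And>x. x \<in> R \<Longrightarrow> \<not> r x x"
    and trans: "\<And>x y z. x \<in> R \<Longrightarrow> y \<in> R \<Longrightarrow> z \<in> R \<Longrightarrow> r x y \<Longrightarrow> r y z \<Longrightarrow> r x z"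
    and total: "\<And>x y. x \<in> R \<Longrightarrow> y \<in> R \<Longrightarrow> x \<noteq> y \<Longrightarrow> r x y \<or> r y x"
    and "x \<in> R" "y \<in> R"
  shows "card {z\<in>R. r z x} < card {z\<in>R. r z y} \<longleftrightarrow> r x y"
proof
  have less: "card {z\<in>R. r z a} < card {z\<in>R. r z b}" if "a \<in> R" "b \<in> R" "r a b" for a b
  proof (rule psubset_card_mono)
    show "finite {z\<in>R. r z b}"
      using \<open>finite R\<close> by simp
    show "{z\<in>R. r z a} \<subset> {z\<in>R. r z b}"
      using that trans irrefl by blast
  qed
  then show "r x y \<Longrightarrow> card {z\<in>R. r z x} < card {z\<in>R. r z y}"
    using assms(5,6) .
  show "r x y" if "card {z\<in>R. r z x} < card {z\<in>R. r z y}"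
    using less[of y x] total[of x y] that assms(5,6) by fastforce
qed

lemma rank_bij_betw:
  fixes r :: "'a \<Rightarrow> 'a \<Rightarrow> bool"
  assumes "finite R"
    and irrefl: "\<And>x. x \<in> R \<Longrightarrow> \<not> r x x"
    and trans: "\<And>x y z. x \<in> R \<Longrightarrow> y \<in> R \<Longrightarrow> z \<in> R \<Longrightarrow> r x y \<Longrightarrow> r y z \<Longrightarrow> r x z"
    and total: "\<And>x y. x \<in> R \<Longrightarrow> y \<in> R \<Longrightarrow> x \<noteq> y \<Longrightarrow> r x y \<or> r y x"
  shows "bij_betw (\<lambda>x. Suc (card {z\<in>R. r z x})) R {1..card R}"
proof -
  let ?rank = "\<lambda>x. Suc (card {z\<in>R. r z x})"
  have less_iff: "card {z\<in>R. r z x} < card {z\<in>R. r z y} \<longleftrightarrow> r x y" if "x \<in> R" "y \<in> R" for x y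
    using assms that by (rule rank_less_iff)
  have inj: "inj_on ?rank R"
  proof (rule inj_onI)
    fix x y assume xy: "x \<in> R" "y \<in> R" "?rank x = ?rank y"
    show "x = y"
    proof (rule ccontr)
      assume "x \<noteq> y"
      then have "r x y \<or> r y x" using total xy by blast
      then show False
        using less_iff[OF xy(1,2)] less_iff[OF xy(2,1)] xy(3) by auto
    qed
  qed
  have "?rank x \<in> {1..card R}" if "x \<in> R" for x
  proof -
    have "card {z\<in>R. r z x} \<le> card (R - {x})"
      using \<open>finite R\<close> irrefl that by (intro card_mono) auto
    moreover have "card (R - {x}) < card R"
      using \<open>finite R\<close> that by (rule card_Diff1_less)
    ultimately show ?thesis by simp
  qed
  then have "?rank ` R \<subseteq> {1..card R}" by blast
  moreover have "card (?rank ` R) = card {1..card R}"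
    using card_image[OF inj] by simp
  ultimately show ?thesis
    using inj by (simp add: bij_betw_def card_subset_eq)
qed

definition P_partitions :: "'a set \<Rightarrow> ('a \<Rightarrow> 'a \<Rightarrow> bool) \<Rightarrow> ('a \<Rightarrow> int) \<Rightarrow> ('a \<Rightarrow> nat) set" where
  "P_partitions R le w = {f. (\<forall>x. x \<notin> R \<longrightarrow> f x = 0) \<and>
     (\<forall>x\<in>R. \<forall>y\<in>R. le x y \<longrightarrow> f y \<le> f x \<and> (w y < w x \<longrightarrow> f y < f x))}"

lemma P_partitions_zero_outside: "f \<in> P_partitions R le w \<Longrightarrow> x \<notin> R \<Longrightarrow> f x = 0"
  by (simp add: P_partitions_def)

lemma P_partitionsD:
  assumes "f \<in> P_partitions R le w" "x \<in> R" "y \<in> R" "le x y"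
  shows "f y \<le> f x" and "w y < w x \<Longrightarrow> f y < f x"
  using assms unfolding P_partitions_def by auto

definition descents :: "'a set \<Rightarrow> ('a \<Rightarrow> int) \<Rightarrow> ('a \<Rightarrow> nat) \<Rightarrow> nat set" where
  "descents R w g = {i. 1 \<le> i \<and> i < card R \<and> w (inv_into R g (i + 1)) < w (inv_into R g i)}"

lemma maj_of_eq_sum_descents: "maj_of R w g = \<Sum>(descents R w g)"
  unfolding maj_of_def descents_def by simp

lemma descents_subset: "descents R w g \<subseteq> {1..card R - 1}"
  unfolding descents_def by auto

definition descent_seqs :: "nat \<Rightarrow> nat set \<Rightarrow> (nat \<Rightarrow> nat) set" where
  "descent_seqs m D = {s. (\<forall>i. i \<notin> {1..m} \<longrightarrow> s i = 0) \<and>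
     (\<forall>i\<in>{1..m}. s (Suc i) + (if i \<in> D then 1 else 0) \<le> s i)}"

lemma descent_seqs_mono:
  assumes "s \<in> descent_seqs m D" "1 \<le> i" "i \<le> j"
  shows "s j \<le> s i"
  using assms(3)
proof (induction j rule: dec_induct)
  case (step k)
  have "s (Suc k) \<le> s k"
    using assms(1,2) step(1) unfolding descent_seqs_def
    by (cases "k \<le> m") (auto dest!: bspec[of _ _ k])
  with step.IH show ?case by linarith
qed simp

lemma descent_seqs_Suc_last_zero:
  assumes "D \<subseteq> {1..m}"
  shows "{s \<in> descent_seqs (Suc m) D. s (Suc m) = 0} = descent_seqs m D"
  using assms unfolding descent_seqs_def
  by (auto simp: le_Suc_eq)

definition seq_partition :: "'a set \<Rightarrow> ('a \<Rightarrow> nat) \<Rightarrow> (nat \<Rightarrow> nat) \<Rightarrow> 'a \<Rightarrow> nat" where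
  "seq_partition R g s = (\<lambda>x. if x \<in> R then s (g x) else 0)"

definition partition_seq :: "'a set \<Rightarrow> ('a \<Rightarrow> nat) \<Rightarrow> ('a \<Rightarrow> nat) \<Rightarrow> nat \<Rightarrow> nat" where
  "partition_seq R f g = (\<lambda>i. if i \<in> {1..card R} then f (inv_into R g i) else 0)"

text \<open>Sorting by decreasing value of f, ties broken by increasing label, inverts the
  fundamental bijection.\<close>
definition sorts_before :: "('a \<Rightarrow> nat) \<Rightarrow> ('a \<Rightarrow> int) \<Rightarrow> 'a \<Rightarrow> 'a \<Rightarrow> bool" where
  "sorts_before f w y x \<longleftrightarrow> f x < f y \<or> (f y = f x \<and> w y < w x)"

lemma sorts_before_irrefl: "\<not> sorts_before f w x x"
  by (simp add: sorts_before_def)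

lemma sorts_before_trans: "sorts_before f w x y \<Longrightarrow> sorts_before f w y z \<Longrightarrow> sorts_before f w x z"
  unfolding sorts_before_def by force

definition sorting_ext :: "'a set \<Rightarrow> ('a \<Rightarrow> int) \<Rightarrow> ('a \<Rightarrow> nat) \<Rightarrow> 'a \<Rightarrow> nat" where
  "sorting_ext R w f = restrict (\<lambda>x. Suc (card {y\<in>R. sorts_before f w y x})) R"

locale finite_labelling =
  fixes R :: "'a set" and w :: "'a \<Rightarrow> int"
  assumes finite: "finite R" and inj: "inj_on w R"
begin

abbreviation "n \<equiv> card R"

lemma sorts_before_total:
  "x \<in> R \<Longrightarrow> y \<in> R \<Longrightarrow> x \<noteq> y \<Longrightarrow> sorts_before f w x y \<or> sorts_before f w y x"
proof -
  assume "x \<in> R" "y \<in> R" "x \<noteq> y"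
  then have "w x \<noteq> w y" using inj by (meson inj_onD)
  then show ?thesis unfolding sorts_before_def by linarith
qed

lemma sorting_ext_bij: "bij_betw (sorting_ext R w f) R {1..n}"
proof -
  have "bij_betw (\<lambda>x. Suc (card {y\<in>R. sorts_before f w y x})) R {1..n}"
    by (rule rank_bij_betw[OF finite])
      (rule sorts_before_irrefl, (rule sorts_before_trans; assumption), (rule sorts_before_total; assumption))
  then show ?thesis
    unfolding sorting_ext_def by (rule bij_betw_cong[THEN iffD1, rotated]) auto
qed

lemma sorting_ext_less_iff:
  assumes "x \<in> R" "y \<in> R"
  shows "sorting_ext R w f x < sorting_ext R w f y \<longleftrightarrow> sorts_before f w x y"
proof -
  have "card {z\<in>R. sorts_before f w z x} < card {z\<in>R. sorts_before f w z y} \<longleftrightarrow> sorts_before f w x y"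
    by (rule rank_less_iff[OF finite _ _ _ assms])
      (rule sorts_before_irrefl, (rule sorts_before_trans; assumption), (rule sorts_before_total; assumption))
  then show ?thesis
    using assms by (simp add: sorting_ext_def)
qed

lemma lin_ext_bij: "g \<in> lin_exts R le \<Longrightarrow> bij_betw g R {1..n}"
  unfolding lin_exts_def by simp

lemma bij_inv_into_simps:
  assumes "bij_betw g R {1..n}"
  shows "\<And>x. x \<in> R \<Longrightarrow> inv_into R g (g x) = x"
    and "\<And>i. i \<in> {1..n} \<Longrightarrow> g (inv_into R g i) = i"
    and "\<And>i. i \<in> {1..n} \<Longrightarrow> inv_into R g i \<in> R"
    and "\<And>x. x \<in> R \<Longrightarrow> g x \<in> {1..n}"
  using assms by (auto simp: bij_betw_def f_inv_into_f inv_into_into)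

text \<open>Where a descent-compatible sequence is constant, the word read off g has no descent,
  so the labels increase.\<close>
lemma label_mono_on_plateau:
  assumes g: "bij_betw g R {1..n}" and s: "s \<in> descent_seqs n (descents R w g)"
    and "1 \<le> i" "i \<le> j" "j \<le> n" "s j = s i"
  shows "w (inv_into R g i) \<le> w (inv_into R g j)"
  using assms(4-6)
proof (induction j rule: dec_induct)
  case (step k)
  have k: "1 \<le> k" "k < n" and "s k \<le> s i"
    using step assms(3) descent_seqs_mono[OF s assms(3) step(1)] by auto
  moreover have "s (Suc k) + (if k \<in> descents R w g then 1 else 0) \<le> s k"
    using s k unfolding descent_seqs_def by auto
  ultimately have "k \<notin> descents R w g" "s k = s i"
    using step.prems descent_seqs_mono[OF s \<open>1 \<le> k\<close>, of "Suc k"] by auto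
  then show ?case
    using step k unfolding descents_def by fastforce
qed simp

lemma seq_partition_in_P_partitions:
  assumes g: "g \<in> lin_exts R le" and s: "s \<in> descent_seqs n (descents R w g)"
  shows "seq_partition R g s \<in> P_partitions R le w"
  unfolding P_partitions_def
proof (intro CollectI conjI allI impI ballI)
  fix x y assume xy: "x \<in> R" "y \<in> R" "le x y"
  have gb: "bij_betw g R {1..n}" and gxy: "g x \<le> g y"
    using g xy unfolding lin_exts_def by auto
  note inv = bij_inv_into_simps[OF gb]
  have "1 \<le> g x" "g y \<le> n" using inv(4) xy by auto
  then have mono: "s (g y) \<le> s (g x)" using descent_seqs_mono[OF s _ gxy] by simp
  then show "seq_partition R g s y \<le> seq_partition R g s x"
    using xy by (simp add: seq_partition_def)
  assume "w y < w x"
  moreover have "s (g y) = s (g x) \<Longrightarrow> w x \<le> w y"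
    using label_mono_on_plateau[OF gb s \<open>1 \<le> g x\<close> gxy \<open>g y \<le> n\<close>] inv(1) xy by simp
  ultimately show "seq_partition R g s y < seq_partition R g s x"
    using mono xy by (fastforce simp: seq_partition_def)
qed (simp add: seq_partition_def)

lemma sorting_ext_in_lin_exts:
  assumes f: "f \<in> P_partitions R le w"
  shows "sorting_ext R w f \<in> lin_exts R le"
proof -
  have "sorting_ext R w f x \<le> sorting_ext R w f y" if xy: "x \<in> R" "y \<in> R" "le x y" for x y
  proof (cases "x = y")
    case False
    then have "w x \<noteq> w y" using inj xy by (meson inj_onD)
    moreover have "f y \<le> f x" "w y < w x \<longrightarrow> f y < f x"
      using f xy unfolding P_partitions_def by auto
    ultimately have "sorts_before f w x y" unfolding sorts_before_def by auto
    then have "sorting_ext R w f x < sorting_ext R w f y"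
      using sorting_ext_less_iff[OF xy(1,2)] by blast
    then show ?thesis by simp
  qed simp
  then show ?thesis
    using sorting_ext_bij[of f] unfolding lin_exts_def by (auto simp: sorting_ext_def)
qed

lemma partition_seq_in_descent_seqs:
  assumes "f \<in> P_partitions R le w"
  shows "partition_seq R f (sorting_ext R w f) \<in> descent_seqs n (descents R w (sorting_ext R w f))"
proof -
  let ?g = "sorting_ext R w f"
  note inv = bij_inv_into_simps[OF sorting_ext_bij[of f]]
  have step: "f (inv_into R ?g (Suc i)) + (if i \<in> descents R w ?g then 1 else 0) \<le> f (inv_into R ?g i)"
    if i: "i \<in> {1..n}" "i < n" for i
  proof -
    have i1: "Suc i \<in> {1..n}" using i by auto
    have "sorts_before f w (inv_into R ?g i) (inv_into R ?g (Suc i))"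
      using sorting_ext_less_iff[OF inv(3)[OF i(1)] inv(3)[OF i1], of f] inv(2)[OF i(1)] inv(2)[OF i1]
      by simp
    then show ?thesis unfolding sorts_before_def descents_def by auto
  qed
  show ?thesis unfolding descent_seqs_def
  proof (intro CollectI conjI allI impI ballI)
    fix i assume i: "i \<in> {1..n}"
    show "partition_seq R f ?g (Suc i) + (if i \<in> descents R w ?g then 1 else 0) \<le> partition_seq R f ?g i"
    proof (cases "i < n")
      case True
      then show ?thesis using step[OF i True] i by (simp add: partition_seq_def)
    next
      case False
      then show ?thesis using i by (simp add: partition_seq_def descents_def)
    qed
  qed (auto simp: partition_seq_def)
qed

lemma seq_partition_partition_seq:
  assumes "f \<in> P_partitions R le w"
  shows "seq_partition R (sorting_ext R w f) (partition_seq R f (sorting_ext R w f)) = f"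
  using assms bij_inv_into_simps(1,4)[OF sorting_ext_bij[of f]]
  by (auto simp: fun_eq_iff seq_partition_def partition_seq_def P_partitions_def)

lemma sorts_before_seq_partition:
  assumes g: "g \<in> lin_exts R le" and s: "s \<in> descent_seqs n (descents R w g)"
    and xy: "x \<in> R" "y \<in> R" "g y < g x"
  shows "sorts_before (seq_partition R g s) w y x"
proof -
  note gb = lin_ext_bij[OF g]
  note inv = bij_inv_into_simps[OF gb]
  have gy: "1 \<le> g y" "g x \<le> n" using inv(4) xy by auto
  have "s (g x) \<le> s (g y)" using descent_seqs_mono[OF s gy(1)] xy by simp
  moreover have "s (g x) = s (g y) \<Longrightarrow> w y \<le> w x"
    using label_mono_on_plateau[OF gb s gy(1), of "g x"] xy gy inv(1) by simp
  moreover have "w y \<noteq> w x" using inj xy by (metis inj_onD less_irrefl)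
  ultimately show ?thesis unfolding sorts_before_def seq_partition_def using xy by auto
qed

lemma sorts_before_seq_partition_iff:
  assumes g: "g \<in> lin_exts R le" and s: "s \<in> descent_seqs n (descents R w g)"
    and xy: "x \<in> R" "y \<in> R"
  shows "sorts_before (seq_partition R g s) w y x \<longleftrightarrow> g y < g x"
proof
  let ?F = "seq_partition R g s"
  assume yx: "sorts_before ?F w y x"
  show "g y < g x"
  proof (rule ccontr)
    assume "\<not> g y < g x"
    then consider "g x = g y" | "g x < g y" by linarith
    then show False
    proof cases
      case 1
      then have "x = y" using bij_inv_into_simps(1)[OF lin_ext_bij[OF g]] xy by metis
      then show False using yx by (simp add: sorts_before_irrefl)
    next
      case 2
      then have "sorts_before ?F w x y" using sorts_before_seq_partition[OF g s xy(2,1)] by simp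
      then have "sorts_before ?F w y y" by (rule sorts_before_trans[OF yx])
      then show False by (simp add: sorts_before_irrefl)
    qed
  qed
qed (rule sorts_before_seq_partition[OF assms])

lemma card_less_bij_betw:
  assumes "bij_betw g R {1..n}" "x \<in> R"
  shows "card {y\<in>R. g y < g x} = g x - 1"
proof -
  note inv = bij_inv_into_simps[OF assms(1)]
  have "bij_betw g {y\<in>R. g y < g x} {1..<g x}"
    using bij_betw_subset[OF assms(1), of "{y\<in>R. g y < g x}"] inv assms(2)
    by (auto simp: bij_betw_def image_iff) (metis less_imp_le_nat order.trans)
  then show ?thesis by (simp add: bij_betw_same_card)
qed

lemma sorting_ext_seq_partition:
  assumes g: "g \<in> lin_exts R le" and s: "s \<in> descent_seqs n (descents R w g)"
  shows "sorting_ext R w (seq_partition R g s) = g"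
proof
  fix x
  show "sorting_ext R w (seq_partition R g s) x = g x"
  proof (cases "x \<in> R")
    case False
    moreover have "g \<in> extensional R" using g unfolding lin_exts_def by auto
    ultimately show ?thesis unfolding sorting_ext_def by (simp add: extensional_def)
  next
    case True
    have "{y\<in>R. sorts_before (seq_partition R g s) w y x} = {y\<in>R. g y < g x}"
      using sorts_before_seq_partition_iff[OF g s True] by auto
    then show ?thesis
      using card_less_bij_betw[OF lin_ext_bij[OF g] True] bij_inv_into_simps(4)[OF lin_ext_bij[OF g] True]
      unfolding sorting_ext_def by (simp add: True)
  qed
qed

lemma partition_seq_seq_partition:
  assumes "g \<in> lin_exts R le" and "s \<in> descent_seqs n (descents R w g)"
  shows "partition_seq R (seq_partition R g s) g = s"
  using assms(2) bij_inv_into_simps(2,3)[OF lin_ext_bij[OF assms(1)]]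
  by (auto simp: fun_eq_iff partition_seq_def seq_partition_def descent_seqs_def)

theorem P_partitions_bij:
  "bij_betw (\<lambda>(g, s). seq_partition R g s)
     (SIGMA g:lin_exts R le. descent_seqs n (descents R w g)) (P_partitions R le w)"
proof (rule bij_betw_byWitness[where f' = "\<lambda>f. (sorting_ext R w f, partition_seq R f (sorting_ext R w f))"])
  show "\<forall>a\<in>SIGMA g:lin_exts R le. descent_seqs n (descents R w g).
      (\<lambda>f. (sorting_ext R w f, partition_seq R f (sorting_ext R w f))) ((\<lambda>(g, s). seq_partition R g s) a) = a"
    by (clarsimp simp: sorting_ext_seq_partition partition_seq_seq_partition)
  show "\<forall>f\<in>P_partitions R le w. (\<lambda>(g, s). seq_partition R g s)
      (sorting_ext R w f, partition_seq R f (sorting_ext R w f)) = f"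
    by (clarsimp simp: seq_partition_partition_seq)
  show "(\<lambda>(g, s). seq_partition R g s) ` (SIGMA g:lin_exts R le. descent_seqs n (descents R w g))
      \<subseteq> P_partitions R le w"
    by (clarsimp simp: seq_partition_in_P_partitions)
  show "(\<lambda>f. (sorting_ext R w f, partition_seq R f (sorting_ext R w f))) ` P_partitions R le w
      \<subseteq> (SIGMA g:lin_exts R le. descent_seqs n (descents R w g))"
    by (clarsimp simp: sorting_ext_in_lin_exts partition_seq_in_descent_seqs)
qed

end

section \<open>Counting (P, \<omega>)-partitions by their sum\<close>

lemma bij_betw_Collect:
  assumes "bij_betw h A B" "\<And>a. a \<in> A \<Longrightarrow> P a \<longleftrightarrow> Q (h a)"
  shows "bij_betw h {a\<in>A. P a} {b\<in>B. Q b}"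
proof (rule bij_betw_subset[OF assms(1)])
  show "h ` {a\<in>A. P a} = {b\<in>B. Q b}"
    using assms unfolding bij_betw_def by (auto simp: image_iff)
qed auto

lemma card_filter_eq_sum: "finite A \<Longrightarrow> card {x\<in>A. P x} = (\<Sum>x\<in>A. if P x then 1 else 0)"
  by (simp add: sum.inter_filter[symmetric])

lemma finite_funs_with_sum:
  assumes "finite A"
  shows "finite {s :: 'a \<Rightarrow> nat. (\<forall>i. i \<notin> A \<longrightarrow> s i = 0) \<and> sum s A = N}"
proof (rule finite_subset)
  show "{s. (\<forall>i. i \<notin> A \<longrightarrow> s i = 0) \<and> sum s A = N}
        \<subseteq> {f. \<forall>x. (x \<in> A \<longrightarrow> f x \<in> {0..N}) \<and> (x \<notin> A \<longrightarrow> f x = 0)}"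
    using assms by (auto simp: member_le_sum)
  show "finite {f. \<forall>x. (x \<in> A \<longrightarrow> f x \<in> {0..N}) \<and> (x \<notin> A \<longrightarrow> f x = (0::nat))}"
    using assms by (intro finite_set_of_finite_funs) auto
qed

lemma finite_P_partitions_with_sum:
  "finite R \<Longrightarrow> finite {f \<in> P_partitions R le w. sum f R = N}"
  by (rule finite_subset[OF _ finite_funs_with_sum[of R N]]) (auto simp: P_partitions_def)

lemma finite_descent_seqs_with_sum: "finite {s \<in> descent_seqs m D. sum s {1..m} = N}"
  by (rule finite_subset[OF _ finite_funs_with_sum[of "{1..m}" N]]) (auto simp: descent_seqs_def)

lemma finite_lin_exts: "finite R \<Longrightarrow> finite (lin_exts R le)"
proof (rule finite_subset)
  show "lin_exts R le \<subseteq> {f. \<forall>x. (x \<in> R \<longrightarrow> f x \<in> {1..card R}) \<and> (x \<notin> R \<longrightarrow> f x = undefined)}"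
    unfolding lin_exts_def bij_betw_def extensional_def by auto
  show "finite R \<Longrightarrow> finite {f. \<forall>x. (x \<in> R \<longrightarrow> f x \<in> {1..card R}) \<and> (x \<notin> R \<longrightarrow> f x = undefined)}"
    by (intro finite_set_of_finite_funs) auto
qed

definition weak_seq_count :: "nat \<Rightarrow> nat \<Rightarrow> nat" where
  "weak_seq_count m M = card {s \<in> descent_seqs m {}. sum s {1..m} = M}"

text \<open>The coefficient of x^N in x^a / ((1 - x) \<dots> (1 - x^m)).\<close>
definition shifted_count :: "nat \<Rightarrow> nat \<Rightarrow> nat \<Rightarrow> nat" where
  "shifted_count m a N = (if a \<le> N then weak_seq_count m (N - a) else 0)"

lemma weak_seq_count_0: "weak_seq_count m 0 = 1"
proof -
  have "{s \<in> descent_seqs m {}. sum s {1..m} = 0} = {\<lambda>_. 0}"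
    by (auto simp: descent_seqs_def fun_eq_iff) (metis atLeastAtMost_iff)
  then show ?thesis unfolding weak_seq_count_def by simp
qed

lemma shifted_count_add:
  "shifted_count m (c + a) N = (if c \<le> N then shifted_count m a (N - c) else 0)"
proof (cases "c \<le> N")
  case True
  then have "c + a \<le> N \<longleftrightarrow> a \<le> N - c" and "N - (c + a) = N - c - a" by arith+
  then show ?thesis using True by (simp add: shifted_count_def)
qed (simp add: shifted_count_def)

lemma card_weak_seqs_offset:
  "card {t \<in> descent_seqs m {}. a + sum t {1..m} = N} = shifted_count m a N"
proof (cases "a \<le> N")
  case True
  then have "{t \<in> descent_seqs m {}. a + sum t {1..m} = N} = {t \<in> descent_seqs m {}. sum t {1..m} = N - a}"
    by auto
  then show ?thesis using True by (simp add: shifted_count_def weak_seq_count_def)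
qed (simp add: shifted_count_def)

text \<open>The least descent-compatible sequence for D; subtracting it removes the descent
  conditions and lowers the sum by \<Sum>D.\<close>
definition descent_floor :: "nat set \<Rightarrow> nat \<Rightarrow> nat" where
  "descent_floor D i = (if 1 \<le> i then card {j\<in>D. i \<le> j} else 0)"

context
  fixes m :: nat and D :: "nat set"
  assumes D: "D \<subseteq> {1..m}"
begin

lemma descent_floor_outside:
  assumes "i \<notin> {1..m}"
  shows "descent_floor D i = 0"
proof (cases "1 \<le> i")
  case True
  then have "{j\<in>D. i \<le> j} = {}" using D assms by fastforce
  then show ?thesis using True by (simp only: descent_floor_def if_True card.empty)
qed (simp add: descent_floor_def)

lemma descent_floor_step:
  assumes "1 \<le> i"
  shows "descent_floor D i = descent_floor D (Suc i) + (if i \<in> D then 1 else 0)"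
proof -
  have "finite D" using D finite_subset by blast
  have "{j\<in>D. i \<le> j} = {j\<in>D. Suc i \<le> j} \<union> (if i \<in> D then {i} else {})"
    by (auto simp: Suc_le_eq nat_less_le)
  then show ?thesis
    using assms \<open>finite D\<close> by (auto simp: descent_floor_def card_insert_if)
qed

lemma sum_descent_floor: "sum (descent_floor D) {1..m} = \<Sum>D"
proof -
  have "finite D" using D finite_subset by blast
  have "sum (descent_floor D) {1..m} = (\<Sum>i\<in>{1..m}. \<Sum>j\<in>D. if i \<le> j then 1 else 0)"
    using card_filter_eq_sum[OF \<open>finite D\<close>] by (intro sum.cong refl) (simp add: descent_floor_def)
  also have "\<dots> = (\<Sum>j\<in>D. \<Sum>i\<in>{1..m}. if i \<le> j then 1 else 0)"
    by (rule sum.swap)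
  also have "\<dots> = (\<Sum>j\<in>D. j)"
  proof (intro sum.cong refl)
    fix j assume "j \<in> D"
    then have "{i\<in>{1..m}. i \<le> j} = {1..j}" using D by auto
    then show "(\<Sum>i\<in>{1..m}. if i \<le> j then 1 else 0) = j"
      using card_filter_eq_sum[of "{1..m}" "\<lambda>i. i \<le> j"] by simp
  qed
  finally show ?thesis by simp
qed

lemma descent_floor_le:
  assumes s: "s \<in> descent_seqs m D"
  shows "descent_floor D i \<le> s i"
proof (cases "1 \<le> i \<and> i \<le> Suc m")
  case True
  then have "i \<le> Suc m" by simp
  then show ?thesis
  proof (induction i rule: inc_induct)
    case base
    then show ?case by (simp add: descent_floor_outside)
  next
    case (step k)
    show ?case
    proof (cases "k = 0")
      case False
      then have "k \<in> {1..m}" using step by auto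
      then have "s (Suc k) + (if k \<in> D then 1 else 0) \<le> s k"
        using s unfolding descent_seqs_def by blast
      then show ?thesis
        using step.IH descent_floor_step[of k] \<open>k \<in> {1..m}\<close> by (cases "k \<in> D") auto
    qed (simp add: descent_floor_def)
  qed
qed (auto simp: descent_floor_outside)

lemma descent_seqs_shift_bij:
  "bij_betw (\<lambda>s i. s i - descent_floor D i) (descent_seqs m D) (descent_seqs m {})"
proof (rule bij_betw_byWitness[where f' = "\<lambda>t i. t i + descent_floor D i"])
  show "\<forall>s\<in>descent_seqs m D. (\<lambda>i. (s i - descent_floor D i) + descent_floor D i) = s"
    using descent_floor_le by (simp add: fun_eq_iff)
  show "(\<lambda>s i. s i - descent_floor D i) ` descent_seqs m D \<subseteq> descent_seqs m {}"
  proof clarify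
    fix s assume s: "s \<in> descent_seqs m D"
    have "s (Suc i) - descent_floor D (Suc i) \<le> s i - descent_floor D i" if "i \<in> {1..m}" for i
    proof -
      have "s (Suc i) + (if i \<in> D then 1 else 0) \<le> s i"
        using s that unfolding descent_seqs_def by blast
      then show ?thesis
        using that descent_floor_step[of i] descent_floor_le[OF s, of "Suc i"] by (cases "i \<in> D") auto
    qed
    then show "(\<lambda>i. s i - descent_floor D i) \<in> descent_seqs m {}"
      using s unfolding descent_seqs_def by auto
  qed
  show "(\<lambda>t i. t i + descent_floor D i) ` descent_seqs m {} \<subseteq> descent_seqs m D"
  proof clarify
    fix t assume t: "t \<in> descent_seqs m {}"
    have "t (Suc i) + descent_floor D (Suc i) + (if i \<in> D then 1 else 0) \<le> t i + descent_floor D i"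
      if "i \<in> {1..m}" for i
    proof -
      have "t (Suc i) + (if i \<in> {} then 1 else 0) \<le> t i"
        using t that unfolding descent_seqs_def by blast
      then show ?thesis using descent_floor_step[of i] that by simp
    qed
    then show "(\<lambda>i. t i + descent_floor D i) \<in> descent_seqs m D"
      using t descent_floor_outside unfolding descent_seqs_def by simp
  qed
qed (simp add: fun_eq_iff)

lemma card_descent_seqs_with_sum:
  "card {s \<in> descent_seqs m D. sum s {1..m} = N} = shifted_count m (\<Sum>D) N"
proof -
  have "sum s {1..m} = \<Sum>D + sum (\<lambda>i. s i - descent_floor D i) {1..m}"
    if "s \<in> descent_seqs m D" for s
  proof -
    have le: "\<And>i. descent_floor D i \<le> s i" using descent_floor_le[OF that] .
    then have "sum (\<lambda>i. s i - descent_floor D i) {1..m} = sum s {1..m} - sum (descent_floor D) {1..m}"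
      by (simp add: sum_subtractf_nat)
    moreover have "sum (descent_floor D) {1..m} \<le> sum s {1..m}"
      using le by (simp add: sum_mono)
    ultimately show ?thesis using sum_descent_floor by simp
  qed
  then have "bij_betw (\<lambda>s i. s i - descent_floor D i)
      {s \<in> descent_seqs m D. sum s {1..m} = N} {t \<in> descent_seqs m {}. \<Sum>D + sum t {1..m} = N}"
    by (intro bij_betw_Collect[OF descent_seqs_shift_bij]) simp
  then have "card {s \<in> descent_seqs m D. sum s {1..m} = N} =
      card {t \<in> descent_seqs m {}. \<Sum>D + sum t {1..m} = N}"
    by (rule bij_betw_same_card)
  also have "\<dots> = shifted_count m (\<Sum>D) N"
    by (rule card_weak_seqs_offset)
  finally show ?thesis .
qed

end

context finite_labelling
begin

lemma sum_seq_partition: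
  assumes "g \<in> lin_exts R le"
  shows "sum (seq_partition R g s) R = sum s {1..n}"
proof -
  have "sum (seq_partition R g s) R = sum (\<lambda>x. s (g x)) R"
    by (simp add: seq_partition_def)
  also have "\<dots> = sum s {1..n}"
    using sum.reindex_bij_betw[OF lin_ext_bij[OF assms]] .
  finally show ?thesis .
qed

lemma card_P_partitions_filter:
  "card {f \<in> P_partitions R le w. sum f R = N \<and> Q f} =
    (\<Sum>g\<in>lin_exts R le.
       card {s \<in> descent_seqs n (descents R w g). sum s {1..n} = N \<and> Q (seq_partition R g s)})"
proof -
  let ?S = "\<lambda>g. {s \<in> descent_seqs n (descents R w g). sum s {1..n} = N \<and> Q (seq_partition R g s)}"
  have "bij_betw (\<lambda>(g, s). seq_partition R g s)
      {a \<in> (SIGMA g:lin_exts R le. descent_seqs n (descents R w g)).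
         (\<lambda>(g, s). sum s {1..n} = N \<and> Q (seq_partition R g s)) a}
      {f \<in> P_partitions R le w. sum f R = N \<and> Q f}"
    by (rule bij_betw_Collect[OF P_partitions_bij]) (auto simp: sum_seq_partition)
  moreover have "{a \<in> (SIGMA g:lin_exts R le. descent_seqs n (descents R w g)).
         (\<lambda>(g, s). sum s {1..n} = N \<and> Q (seq_partition R g s)) a} = (SIGMA g:lin_exts R le. ?S g)"
    by auto
  ultimately have "bij_betw (\<lambda>(g, s). seq_partition R g s) (SIGMA g:lin_exts R le. ?S g)
      {f \<in> P_partitions R le w. sum f R = N \<and> Q f}"
    by simp
  then have "card {f \<in> P_partitions R le w. sum f R = N \<and> Q f} = card (SIGMA g:lin_exts R le. ?S g)"
    by (simp add: bij_betw_same_card)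
  also have "\<dots> = (\<Sum>g\<in>lin_exts R le. card (?S g))"
  proof (rule card_SigmaI)
    show "finite (lin_exts R le)" using finite_lin_exts[OF finite] .
    show "\<forall>g\<in>lin_exts R le. finite (?S g)"
    proof
      fix g
      have "?S g \<subseteq> {s \<in> descent_seqs n (descents R w g). sum s {1..n} = N}" by blast
      then show "finite (?S g)" using finite_descent_seqs_with_sum by (rule finite_subset)
    qed
  qed
  finally show ?thesis .
qed

lemma card_P_partitions_offset:
  "card {f \<in> P_partitions R le w. c + sum f R = N} =
    (\<Sum>g\<in>lin_exts R le. shifted_count n (c + maj_of R w g) N)"
proof (cases "c \<le> N")
  case True
  have D: "descents R w g \<subseteq> {1..n}" for g
    unfolding descents_def by auto
  have "{f \<in> P_partitions R le w. c + sum f R = N} = {f \<in> P_partitions R le w. sum f R = N - c \<and> True}"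
    using True by auto
  then have "card {f \<in> P_partitions R le w. c + sum f R = N} =
      (\<Sum>g\<in>lin_exts R le. card {s \<in> descent_seqs n (descents R w g). sum s {1..n} = N - c \<and> True})"
    by (simp only: card_P_partitions_filter)
  also have "\<dots> = (\<Sum>g\<in>lin_exts R le. shifted_count n (c + maj_of R w g) N)"
    using True card_descent_seqs_with_sum[OF D]
    by (simp add: shifted_count_add maj_of_eq_sum_descents)
  finally show ?thesis .
qed (simp add: shifted_count_def)

lemma seq_partition_has_zero_iff:
  assumes g: "g \<in> lin_exts R le" and s: "s \<in> descent_seqs n (descents R w g)" and "1 \<le> n"
  shows "(\<exists>x\<in>R. seq_partition R g s x = 0) \<longleftrightarrow> s n = 0"
proof
  note inv = bij_inv_into_simps[OF lin_ext_bij[OF g]]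
  assume "\<exists>x\<in>R. seq_partition R g s x = 0"
  then obtain x where x: "x \<in> R" "s (g x) = 0" by (auto simp: seq_partition_def)
  then show "s n = 0"
    using descent_seqs_mono[OF s, of "g x" n] inv(4)[OF x(1)] by simp
next
  note inv = bij_inv_into_simps[OF lin_ext_bij[OF g]]
  have "n \<in> {1..n}" using \<open>1 \<le> n\<close> by simp
  moreover assume "s n = 0"
  ultimately show "\<exists>x\<in>R. seq_partition R g s x = 0"
    using inv(2,3) by (metis seq_partition_def)
qed

lemma card_P_partitions_with_zero:
  assumes n: "n = Suc m"
  shows "card {f \<in> P_partitions R le w. sum f R = N \<and> (\<exists>x\<in>R. f x = 0)} =
    (\<Sum>g\<in>lin_exts R le. shifted_count m (maj_of R w g) N)"
proof -
  have D: "descents R w g \<subseteq> {1..m}" for g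
    using descents_subset[of R w g] n by simp
  have "card {f \<in> P_partitions R le w. sum f R = N \<and> (\<exists>x\<in>R. f x = 0)} =
      (\<Sum>g\<in>lin_exts R le. card {s \<in> descent_seqs n (descents R w g). sum s {1..n} = N \<and> s n = 0})"
  proof -
    have "{s \<in> descent_seqs n (descents R w g). sum s {1..n} = N \<and> (\<exists>x\<in>R. seq_partition R g s x = 0)}
        = {s \<in> descent_seqs n (descents R w g). sum s {1..n} = N \<and> s n = 0}" if "g \<in> lin_exts R le" for g
      using seq_partition_has_zero_iff[OF that] n by (intro Collect_cong) auto
    then show ?thesis
      unfolding card_P_partitions_filter by (intro sum.cong refl) simp
  qed
  also have "\<dots> = (\<Sum>g\<in>lin_exts R le. card {s \<in> descent_seqs m (descents R w g). sum s {1..m} = N})"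
  proof (intro sum.cong refl arg_cong[where f = card])
    fix g
    have "{s \<in> descent_seqs n (descents R w g). sum s {1..n} = N \<and> s n = 0} =
        {s \<in> {s \<in> descent_seqs (Suc m) (descents R w g). s (Suc m) = 0}. sum s {1..m} = N}"
      using n by auto
    then show "{s \<in> descent_seqs n (descents R w g). sum s {1..n} = N \<and> s n = 0} =
        {s \<in> descent_seqs m (descents R w g). sum s {1..m} = N}"
      unfolding descent_seqs_Suc_last_zero[OF D] .
  qed
  also have "\<dots> = (\<Sum>g\<in>lin_exts R le. shifted_count m (maj_of R w g) N)"
    unfolding maj_of_eq_sum_descents by (intro sum.cong refl card_descent_seqs_with_sum[OF D])
  finally show ?thesis .
qed

end

section \<open>Cancelling the common denominator\<close>

text \<open>Convolution with a sequence V with V 0 = 1 is injective (the system is triangular).\<close>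
lemma level_cards_eq_if_convolutions_eq:
  fixes \<alpha> :: "'x \<Rightarrow> nat" and \<beta> :: "'y \<Rightarrow> nat" and V :: "nat \<Rightarrow> nat"
  assumes X: "finite X" and Y: "finite Y" and V0: "V 0 = 1"
    and eq: "\<And>N. (\<Sum>x\<in>X. if \<alpha> x \<le> N then V (N - \<alpha> x) else 0) =
                  (\<Sum>y\<in>Y. if \<beta> y \<le> N then V (N - \<beta> y) else 0)"
  shows "card {x\<in>X. \<alpha> x = k} = card {y\<in>Y. \<beta> y = k}"
proof -
  have grouped: "(\<Sum>x\<in>Z. if \<gamma> x \<le> N then V (N - \<gamma> x) else 0) =
      (\<Sum>k\<le>N. card {x\<in>Z. \<gamma> x = k} * V (N - k))" if Z: "finite Z" for Z :: "'z set" and \<gamma> N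
  proof -
    have "(\<Sum>x\<in>Z. if \<gamma> x \<le> N then V (N - \<gamma> x) else 0) = (\<Sum>x\<in>{x\<in>Z. \<gamma> x \<le> N}. V (N - \<gamma> x))"
      using Z by (simp add: sum.inter_filter)
    also have "\<dots> = (\<Sum>k\<le>N. \<Sum>x\<in>{x\<in>{x\<in>Z. \<gamma> x \<le> N}. \<gamma> x = k}. V (N - \<gamma> x))"
      using Z by (intro sum.group[symmetric]) auto
    also have "\<dots> = (\<Sum>k\<le>N. card {x\<in>Z. \<gamma> x = k} * V (N - k))"
    proof (intro sum.cong refl)
      fix k assume "k \<in> {..N}"
      then have "{x\<in>{x\<in>Z. \<gamma> x \<le> N}. \<gamma> x = k} = {x\<in>Z. \<gamma> x = k}" by auto
      then show "(\<Sum>x\<in>{x\<in>{x\<in>Z. \<gamma> x \<le> N}. \<gamma> x = k}. V (N - \<gamma> x)) = card {x\<in>Z. \<gamma> x = k} * V (N - k)"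
        by simp
    qed
    finally show ?thesis .
  qed
  define a where "a k = card {x\<in>X. \<alpha> x = k}" for k
  define b where "b k = card {y\<in>Y. \<beta> y = k}" for k
  have conv: "(\<Sum>k\<le>N. a k * V (N - k)) = (\<Sum>k\<le>N. b k * V (N - k))" for N
    using eq[of N] grouped[OF X, of \<alpha> N] grouped[OF Y, of \<beta> N] unfolding a_def b_def by simp
  have "a k = b k" for k
  proof (induction k rule: less_induct)
    case (less N)
    have "(\<Sum>k<N. a k * V (N - k)) = (\<Sum>k<N. b k * V (N - k))"
      using less by (intro sum.cong) auto
    moreover have "a N + (\<Sum>k<N. a k * V (N - k)) = b N + (\<Sum>k<N. b k * V (N - k))"
      using conv[of N] V0 by (simp add: lessThan_Suc_atMost[symmetric])
    ultimately show ?case by simp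
  qed
  then show ?thesis unfolding a_def b_def .
qed

lemma sum_comp_eq_if_level_cards_eq:
  fixes \<alpha> :: "'x \<Rightarrow> nat" and \<beta> :: "'y \<Rightarrow> nat" and h :: "nat \<Rightarrow> 'c::comm_semiring_1"
  assumes X: "finite X" and Y: "finite Y"
    and c: "\<And>k. card {x\<in>X. \<alpha> x = k} = card {y\<in>Y. \<beta> y = k}"
  shows "(\<Sum>x\<in>X. h (\<alpha> x)) = (\<Sum>y\<in>Y. h (\<beta> y))"
proof -
  let ?T = "\<alpha> ` X \<union> \<beta> ` Y"
  have "(\<Sum>x\<in>X. h (\<alpha> x)) = (\<Sum>k\<in>?T. \<Sum>x\<in>{x\<in>X. \<alpha> x = k}. h (\<alpha> x))"
    using X Y by (intro sum.group[symmetric]) auto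
  also have "\<dots> = (\<Sum>k\<in>?T. of_nat (card {x\<in>X. \<alpha> x = k}) * h k)" by simp
  also have "\<dots> = (\<Sum>k\<in>?T. of_nat (card {y\<in>Y. \<beta> y = k}) * h k)" using c by simp
  also have "\<dots> = (\<Sum>k\<in>?T. \<Sum>y\<in>{y\<in>Y. \<beta> y = k}. h (\<beta> y))" by simp
  also have "\<dots> = (\<Sum>y\<in>Y. h (\<beta> y))"
    using X Y by (intro sum.group) auto
  finally show ?thesis .
qed

lemma sum_power_eq_if_shifted_counts_eq:
  fixes \<alpha> :: "'x \<Rightarrow> nat" and \<beta> :: "'y \<Rightarrow> nat" and q :: "'c::comm_semiring_1"
  assumes "finite X" "finite Y"
    and "\<And>N. (\<Sum>x\<in>X. shifted_count m (\<alpha> x) N) = (\<Sum>y\<in>Y. shifted_count m (\<beta> y) N)"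
  shows "(\<Sum>x\<in>X. q ^ \<alpha> x) = (\<Sum>y\<in>Y. q ^ \<beta> y)"
proof (rule sum_comp_eq_if_level_cards_eq[OF assms(1,2)])
  fix k
  show "card {x\<in>X. \<alpha> x = k} = card {y\<in>Y. \<beta> y = k}"
  proof (rule level_cards_eq_if_convolutions_eq[OF assms(1,2)])
    show "weak_seq_count m 0 = 1" by (rule weak_seq_count_0)
    show "(\<Sum>x\<in>X. if \<alpha> x \<le> N then weak_seq_count m (N - \<alpha> x) else 0) =
        (\<Sum>y\<in>Y. if \<beta> y \<le> N then weak_seq_count m (N - \<beta> y) else 0)" for N
      using assms(3)[of N] unfolding shifted_count_def .
  qed
qed

section \<open>Young diagrams and border strips\<close>

lemma mem_diagram_iff:
  "(i, j) \<in> diagram la \<longleftrightarrow> 1 \<le> i \<and> i \<le> length la \<and> 1 \<le> j \<and> j \<le> la ! (i - 1)"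
  unfolding diagram_def by simp

lemma finite_diagram: "finite (diagram la)"
proof (rule finite_subset)
  show "diagram la \<subseteq> {1..length la} \<times> {1..Max (insert 0 (set la))}"
  proof
    fix c assume c: "c \<in> diagram la"
    obtain i j where ij: "c = (i, j)" by (cases c)
    have "la ! (i - 1) \<in> set la"
      using c unfolding ij mem_diagram_iff by (intro nth_mem) auto
    then have "la ! (i - 1) \<le> Max (insert 0 (set la))" by simp
    then show "c \<in> {1..length la} \<times> {1..Max (insert 0 (set la))}"
      using c unfolding ij mem_diagram_iff by auto
  qed
qed simp

lemma diagram_down_closed:
  assumes la: "is_partition la" and ij: "(i, j) \<in> diagram la"
    and "1 \<le> i'" "i' \<le> i" "1 \<le> j'" "j' \<le> j"
  shows "(i', j') \<in> diagram la"
proof -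
  have ij': "1 \<le> i" "i \<le> length la" "j \<le> la ! (i - 1)" using ij unfolding mem_diagram_iff by auto
  have "la ! (i - 1) \<le> la ! (i' - 1)"
  proof (cases "i' = i")
    case False
    then have "i' - 1 < i - 1" "i - 1 < length la" using assms ij' by auto
    then show ?thesis
      using la sorted_wrt_nth_less[of "(\<ge>)" la "i' - 1" "i - 1"] unfolding is_partition_def by simp
  qed simp
  then show ?thesis using assms ij' unfolding mem_diagram_iff by auto
qed

lemma is_partition_snoc_1:
  assumes "is_partition mu"
  shows "is_partition (mu @ [1])"
proof -
  have "Suc 0 \<le> x" if "x \<in> set mu" for x
    using assms that unfolding is_partition_def by (cases x) auto
  then show ?thesis
    using assms unfolding is_partition_def sorted_wrt_append by auto
qed

lemma diagram_snoc_1: "diagram (mu @ [1]) = insert (Suc (length mu), 1) (diagram mu)"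
proof (rule set_eqI)
  fix c :: "nat \<times> nat"
  obtain a b where c: "c = (a, b)" by (cases c)
  show "c \<in> diagram (mu @ [1]) \<longleftrightarrow> c \<in> insert (Suc (length mu), 1) (diagram mu)"
    unfolding c insert_iff mem_diagram_iff by (cases "a = Suc (length mu)") (auto simp: nth_append)
qed

lemma is_partition_extend_row:
  assumes mu: "is_partition mu" and k: "k < length mu"
    and above: "k = 0 \<or> Suc (mu ! k) \<le> mu ! (k - 1)"
  shows "is_partition (mu[k := Suc (mu ! k)])"
proof -
  let ?nu = "mu[k := Suc (mu ! k)]"
  have sorted: "sorted_wrt (\<ge>) mu" and pos: "0 \<notin> set mu"
    using mu unfolding is_partition_def by auto
  have "?nu ! b \<le> ?nu ! a" if ab: "a < b" "b < length mu" for a b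
  proof -
    have ba: "mu ! b \<le> mu ! a" using sorted_wrt_nth_less[OF sorted ab] by simp
    consider "a = k" | "b = k" | "a \<noteq> k" "b \<noteq> k" by blast
    then show ?thesis
    proof cases
      case 2
      then have "mu ! (k - 1) \<le> mu ! a"
        using ab sorted_wrt_nth_less[OF sorted, of a "k - 1"] by (cases "a = k - 1") auto
      then show ?thesis using 2 above ab k by auto
    qed (use ab ba k in auto)
  qed
  then have "sorted_wrt (\<ge>) ?nu"
    by (simp add: sorted_wrt_iff_nth_less)
  moreover have "0 \<notin> set ?nu"
    using pos set_update_subset_insert[of mu k] by auto
  ultimately show ?thesis unfolding is_partition_def by simp
qed

lemma diagram_extend_row:
  assumes "k < length mu"
  shows "diagram (mu[k := Suc (mu ! k)]) = insert (Suc k, Suc (mu ! k)) (diagram mu)"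
  using assms by (auto simp: diagram_def nth_list_update split: if_splits)

lemma exists_partition_insert_corner:
  assumes mu: "is_partition mu" and nin: "(i, j) \<notin> diagram mu" and "1 \<le> i" "1 \<le> j"
    and up: "i = 1 \<or> (i - 1, j) \<in> diagram mu" and left: "j = 1 \<or> (i, j - 1) \<in> diagram mu"
  shows "\<exists>nu. is_partition nu \<and> diagram nu = insert (i, j) (diagram mu)"
proof (cases "i \<le> length mu")
  case True
  define k where "k = i - 1"
  have k: "k < length mu" "i = Suc k" using True \<open>1 \<le> i\<close> by (auto simp: k_def)
  have "mu ! k \<noteq> 0" using mu k unfolding is_partition_def by (metis nth_mem)
  then have "j \<noteq> 1" using nin k by (auto simp: mem_diagram_iff)
  then have j: "j = Suc (mu ! k)"
    using left nin k by (auto simp: mem_diagram_iff)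
  have "k = 0 \<or> Suc (mu ! k) \<le> mu ! (k - 1)"
    using up j k by (auto simp: mem_diagram_iff)
  then show ?thesis
    using is_partition_extend_row[OF mu k(1)] diagram_extend_row[OF k(1)] j k by auto
next
  case False
  have "j = 1" using left False by (auto simp: mem_diagram_iff)
  moreover have "i = Suc (length mu)"
    using up
  proof
    assume "i = 1"
    then show ?thesis using False by linarith
  next
    assume "(i - 1, j) \<in> diagram mu"
    then show ?thesis using False \<open>1 \<le> i\<close> unfolding mem_diagram_iff by linarith
  qed
  ultimately show ?thesis
    using is_partition_snoc_1[OF mu] diagram_snoc_1 by auto
qed

lemma mem_skew_iff: "c \<in> skew la mu \<longleftrightarrow> c \<in> diagram la \<and> c \<notin> diagram mu"
  unfolding skew_def by auto

lemma skew_pos: "c \<in> skew la mu \<Longrightarrow> 1 \<le> fst c \<and> 1 \<le> snd c"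
  unfolding mem_skew_iff by (cases c) (auto simp: mem_diagram_iff)

lemma finite_skew: "finite (skew la mu)"
  unfolding skew_def using finite_diagram by simp

lemma skew_rectangle_closed:
  assumes "is_partition la" "is_partition mu" and c: "c \<in> skew la mu" and d: "d \<in> skew la mu"
    and "fst d \<le> a" "a \<le> fst c" "snd d \<le> b" "b \<le> snd c"
  shows "(a, b) \<in> skew la mu"
proof -
  have d1: "1 \<le> fst d" "1 \<le> snd d" using skew_pos[OF d] by auto
  have "(a, b) \<in> diagram la"
    using diagram_down_closed[OF assms(1), of "fst c" "snd c" a b] c assms d1 unfolding mem_skew_iff by auto
  moreover have "(a, b) \<notin> diagram mu"
    using diagram_down_closed[OF assms(2), of a b "fst d" "snd d"] d assms d1 unfolding mem_skew_iff by auto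
  ultimately show ?thesis unfolding mem_skew_iff by simp
qed

lemma inner_corner_in_skew: "u \<in> inner_corners la mu \<Longrightarrow> u \<in> skew la mu"
  unfolding inner_corners_def by simp

lemma finite_inner_corners: "finite (inner_corners la mu)"
  using finite_skew inner_corner_in_skew by (metis finite_subset subsetI)

lemma inner_corner_maximal:
  assumes u: "u \<in> inner_corners la mu" and c: "c \<in> skew la mu" and "bs_le u c"
  shows "c = u"
proof -
  obtain nu where nu: "is_partition nu" "diagram nu = insert u (diagram mu)"
    using u unfolding inner_corners_def by auto
  then have "(fst c, snd c) \<in> diagram nu"
    using diagram_down_closed[OF nu(1), of "fst u" "snd u" "fst c" "snd c"] skew_pos[OF c] assms(3)
    unfolding bs_le_def by auto
  then show ?thesis using c nu unfolding mem_skew_iff by auto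
qed

text \<open>A cell of the skew shape below c that is minimal for fst + snd can be added to [mu].\<close>
lemma exists_inner_corner_above:
  assumes la: "is_partition la" and mu: "is_partition mu" and c: "c \<in> skew la mu"
  shows "\<exists>u\<in>inner_corners la mu. bs_le c u"
proof -
  obtain d where d: "d \<in> skew la mu" "bs_le c d"
    and dmin: "\<And>d'. d' \<in> skew la mu \<Longrightarrow> bs_le c d' \<Longrightarrow> fst d + snd d \<le> fst d' + snd d'"
    using ex_has_least_nat[of "\<lambda>d. d \<in> skew la mu \<and> bs_le c d" c "\<lambda>d. fst d + snd d"] c
    unfolding bs_le_def by auto
  obtain i j where dij: "d = (i, j)" by (cases d)
  have ij1: "1 \<le> i" "1 \<le> j" using skew_pos[OF d(1)] dij by auto
  have dla: "(i, j) \<in> diagram la" "(i, j) \<notin> diagram mu" using d dij unfolding mem_skew_iff by auto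
  have in_mu: "(i', j') \<in> diagram mu"
    if "(i', j') \<in> diagram la" "1 \<le> i'" "1 \<le> j'" "i' + j' < i + j" "bs_le c (i', j')" for i' j'
    using dmin[of "(i', j')"] that dij unfolding mem_skew_iff by fastforce
  have up: "i = 1 \<or> (i - 1, j) \<in> diagram mu"
  proof (cases "i = 1")
    case False
    have "(i - 1, j) \<in> diagram la"
      using diagram_down_closed[OF la dla(1), of "i - 1" j] ij1 False by auto
    moreover have "bs_le c (i - 1, j)" using d(2) dij unfolding bs_le_def by auto
    ultimately show ?thesis
      using in_mu[of "i - 1" j] ij1 False by auto
  qed simp
  have left: "j = 1 \<or> (i, j - 1) \<in> diagram mu"
  proof (cases "j = 1")
    case False
    have "(i, j - 1) \<in> diagram la"
      using diagram_down_closed[OF la dla(1), of i "j - 1"] ij1 False by auto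
    moreover have "bs_le c (i, j - 1)" using d(2) dij unfolding bs_le_def by auto
    ultimately show ?thesis
      using in_mu[of i "j - 1"] ij1 False by auto
  qed simp
  have "d \<in> inner_corners la mu"
    using exists_partition_insert_corner[OF mu dla(2) ij1 up left] d dij
    unfolding inner_corners_def by auto
  then show ?thesis using d(2) by blast
qed

locale border_strip_shape =
  fixes la mu :: "nat list"
  assumes strip: "border_strip la mu"
begin

abbreviation "S \<equiv> skew la mu"

lemma la_partition: "is_partition la" and mu_partition: "is_partition mu"
  and skew_nonempty: "S \<noteq> {}"
  and no_square: "\<not> {(i, j), (i + 1, j), (i, j + 1), (i + 1, j + 1)} \<subseteq> S"
  using strip unfolding border_strip_def by auto

lemma not_strictly_below:
  assumes c: "c \<in> S" and d: "d \<in> S" and "fst d < fst c" "snd d < snd c"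
  shows False
proof -
  obtain i j where dij: "d = (i, j)" by (cases d)
  have "(i, j) \<in> S" "(i + 1, j) \<in> S" "(i, j + 1) \<in> S" "(i + 1, j + 1) \<in> S"
    using skew_rectangle_closed[OF la_partition mu_partition c d] assms dij by auto
  then show False using no_square[of i j] by auto
qed

lemma content_inj_on_skew:
  assumes c: "c \<in> S" and d: "d \<in> S" and "content c = content d"
  shows "c = d"
proof -
  have e: "int (snd c) - int (fst c) = int (snd d) - int (fst d)"
    using assms(3) unfolding content_def .
  consider "fst c = fst d" | "fst c < fst d" | "fst d < fst c" by linarith
  then show ?thesis
  proof cases
    case 1
    then show ?thesis using e by (simp add: prod_eq_iff)
  next
    case 2
    then show ?thesis using not_strictly_below[OF d c] e by simp
  next
    case 3
    then show ?thesis using not_strictly_below[OF c d] e by simp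
  qed
qed

lemma comparable_same_line:
  assumes "c \<in> S" "d \<in> S" "bs_le c d"
  shows "fst c = fst d \<or> snd c = snd d"
  using not_strictly_below[OF assms(1,2)] assms(3) unfolding bs_le_def by fastforce

text \<open>If two cells on either side of an inner corner u were comparable, the row or column
  joining them would contain a cell of content c(u), which must be u itself; but then u
  would lie strictly below a cell of the strip, contradicting its maximality.\<close>
lemma not_bs_le_across_inner_corner:
  assumes u: "u \<in> inner_corners la mu" and a: "a \<in> S" and b: "b \<in> S"
    and ca: "content a < content u" and cb: "content u < content b"
  shows "\<not> bs_le a b"
proof
  assume le: "bs_le a b"
  then have le': "fst b \<le> fst a" "snd b \<le> snd a" unfolding bs_le_def by auto
  from comparable_same_line[OF a b le] show False
  proof
    assume "fst a = fst b"
    then show False using ca cb le' unfolding content_def by linarith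
  next
    assume same_column: "snd a = snd b"
    define r where "r = nat (int (snd a) - content u)"
    have r: "int r = int (snd a) - content u" "fst b \<le> r" "r \<le> fst a"
      using ca cb same_column skew_pos[OF b] unfolding r_def content_def by auto
    have "(r, snd a) \<in> S"
      using skew_rectangle_closed[OF la_partition mu_partition a b] same_column r by auto
    moreover have "content (r, snd a) = content u" using r unfolding content_def by simp
    ultimately have "(r, snd a) = u" using content_inj_on_skew[OF _ inner_corner_in_skew[OF u]] by blast
    then have "bs_le u b" using r same_column unfolding bs_le_def by auto
    then show False using inner_corner_maximal[OF u b] cb by simp
  qed
qed

lemma not_bs_ge_across_inner_corner:
  assumes u: "u \<in> inner_corners la mu" and a: "a \<in> S" and b: "b \<in> S"
    and ca: "content a < content u" and cb: "content u < content b"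
  shows "\<not> bs_le b a"
proof
  assume le: "bs_le b a"
  then have le': "fst a \<le> fst b" "snd a \<le> snd b" unfolding bs_le_def by auto
  from comparable_same_line[OF b a le] show False
  proof
    assume "snd b = snd a"
    then show False using ca cb le' unfolding content_def by linarith
  next
    assume same_row: "fst b = fst a"
    define s where "s = nat (int (fst a) + content u)"
    have s: "int s = int (fst a) + content u" "snd a \<le> s" "s \<le> snd b"
      using ca cb same_row skew_pos[OF a] unfolding s_def content_def by auto
    have "(fst a, s) \<in> S"
      using skew_rectangle_closed[OF la_partition mu_partition b a] same_row s by auto
    moreover have "content (fst a, s) = content u" using s unfolding content_def by simp
    ultimately have "(fst a, s) = u" using content_inj_on_skew[OF _ inner_corner_in_skew[OF u]] by blast
    then have "bs_le u a" using s unfolding bs_le_def by auto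
    then show False using inner_corner_maximal[OF u a] ca by simp
  qed
qed

lemma incomparable_across_inner_corner:
  assumes "u \<in> inner_corners la mu" "a \<in> S" "b \<in> S" "content a < content u" "content u < content b"
  shows "\<not> bs_le a b \<and> \<not> bs_le b a"
  using not_bs_le_across_inner_corner[OF assms] not_bs_ge_across_inner_corner[OF assms] by blast

end

section \<open>Mobile posets\<close>

lemma poset_onD:
  assumes "poset_on A le"
  shows "x \<in> A \<Longrightarrow> le x x"
    and "x \<in> A \<Longrightarrow> y \<in> A \<Longrightarrow> le x y \<Longrightarrow> le y x \<Longrightarrow> x = y"
    and "x \<in> A \<Longrightarrow> y \<in> A \<Longrightarrow> z \<in> A \<Longrightarrow> le x y \<Longrightarrow> le y z \<Longrightarrow> le x z"
  using assms unfolding poset_on_def by blast+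

lemma finite_poset_exists_cover:
  assumes "finite A" "poset_on A le" "x \<in> A" "y \<in> A" "le x y" "x \<noteq> y"
  shows "\<exists>z\<in>A. covers A le x z \<and> le z y"
proof -
  note po = poset_onD[OF assms(2)]
  let ?C = "{z\<in>A. le x z \<and> le z y \<and> z \<noteq> x}"
  obtain z where z: "z \<in> ?C"
    and zmin: "\<And>z'. z' \<in> ?C \<Longrightarrow> card {v\<in>A. le v z} \<le> card {v\<in>A. le v z'}"
    using ex_has_least_nat[of "\<lambda>z. z \<in> ?C" y "\<lambda>z. card {v\<in>A. le v z}"] assms po(1)[OF assms(4)]
    by auto
  have "\<not> (le x w \<and> le w z \<and> w \<noteq> x \<and> w \<noteq> z)" if w: "w \<in> A" for w
  proof
    assume w': "le x w \<and> le w z \<and> w \<noteq> x \<and> w \<noteq> z"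
    then have "w \<in> ?C" using w z po(3)[OF w _ assms(4), of z] by auto
    moreover have "{v\<in>A. le v w} \<subset> {v\<in>A. le v z}"
      using w w' z po(1)[of z] po(2)[OF w, of z] po(3)[of _ w z] by auto
    then have "card {v\<in>A. le v w} < card {v\<in>A. le v z}"
      using assms(1) by (simp add: psubset_card_mono)
    ultimately show False using zmin by fastforce
  qed
  then have "covers A le x z"
    using z assms(3) unfolding covers_def by blast
  then show ?thesis using z by blast
qed

lemma bs_le_refl [simp]: "bs_le c c"
  unfolding bs_le_def by simp

lemma bs_le_trans: "bs_le a b \<Longrightarrow> bs_le b c \<Longrightarrow> bs_le a c"
  unfolding bs_le_def by auto

lemma bs_le_antisym: "bs_le a b \<Longrightarrow> bs_le b a \<Longrightarrow> a = b"
  unfolding bs_le_def by (auto simp: prod_eq_iff)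

lemma mob_le_simps [simp]:
  "mob_le hle att (Inl c) (Inl d) = bs_le c d"
  "mob_le hle att (Inr b) (Inr b') = hle b b'"
  "mob_le hle att (Inr b) (Inl c) = bs_le (att b) c"
  "mob_le hle att (Inl c) (Inr b) = False"
  unfolding mob_le_def by simp_all

definition cell_of :: "('b \<Rightarrow> nat \<times> nat) \<Rightarrow> (nat \<times> nat) + 'b \<Rightarrow> nat \<times> nat" where
  "cell_of att x = (case x of Inl c \<Rightarrow> c | Inr b \<Rightarrow> att b)"

lemma cell_of_simps [simp]: "cell_of att (Inl c) = c" "cell_of att (Inr b) = att b"
  unfolding cell_of_def by simp_all

lemma mob_le_trans:
  assumes "mobile_data S H hle att"
    and C: "x \<in> mob_carrier S H" "y \<in> mob_carrier S H" "z \<in> mob_carrier S H"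
    and le: "mob_le hle att x y" "mob_le hle att y z"
  shows "mob_le hle att x z"
proof -
  have H: "poset_on H hle" and att: "\<And>b b'. b \<in> H \<Longrightarrow> b' \<in> H \<Longrightarrow> hle b b' \<Longrightarrow> att b = att b'"
    using assms(1) unfolding mobile_data_def by auto
  show ?thesis
  proof (cases z)
    case (Inr b'')
    then obtain b b' where "x = Inr b" "y = Inr b'" using le by (cases x; cases y) auto
    then show ?thesis using C le Inr poset_onD(3)[OF H] by (auto simp: mob_carrier_def)
  next
    case (Inl c)
    show ?thesis
    proof (cases y)
      case (Inl d)
      then show ?thesis
        using le \<open>z = Inl c\<close> bs_le_trans[of "cell_of att x" d c] by (cases x) auto
    next
      case (Inr b')
      then obtain b where b: "x = Inr b" using le by (cases x) auto
      have "att b = att b'"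
        by (rule att) (use C le b Inr in \<open>auto simp: mob_carrier_def\<close>)
      then show ?thesis using le b Inr \<open>z = Inl c\<close> by simp
    qed
  qed
qed

lemma poset_on_mob_carrier:
  assumes "mobile_data S H hle att"
  shows "poset_on (mob_carrier S H) (mob_le hle att)"
proof -
  have "poset_on H hle"
    using assms unfolding mobile_data_def by auto
  note h = poset_onD[OF this]
  show ?thesis
    unfolding poset_on_def
  proof (intro conjI)
    show "\<forall>x\<in>mob_carrier S H. mob_le hle att x x"
      using h(1) by (auto simp: mob_carrier_def)
    show "\<forall>x\<in>mob_carrier S H. \<forall>y\<in>mob_carrier S H.
        mob_le hle att x y \<and> mob_le hle att y x \<longrightarrow> x = y"
      using h(2) bs_le_antisym by (auto simp: mob_carrier_def)
    show "\<forall>x\<in>mob_carrier S H. \<forall>y\<in>mob_carrier S H. \<forall>z\<in>mob_carrier S H.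
        mob_le hle att x y \<and> mob_le hle att y z \<longrightarrow> mob_le hle att x z"
      using mob_le_trans[OF assms] by blast
  qed
qed

locale mobile_poset = border_strip_shape la mu for la mu :: "nat list" +
  fixes H :: "'b set" and hle :: "'b \<Rightarrow> 'b \<Rightarrow> bool" and att :: "'b \<Rightarrow> nat \<times> nat"
    and \<omega> :: "(nat \<times> nat) + 'b \<Rightarrow> int"
  assumes mobile: "mobile_data (skew la mu) H hle att"
    and inj: "inj_on \<omega> (mob_carrier (skew la mu) H)"
    and rev_schur: "\<forall>c\<in>skew la mu. \<forall>d\<in>skew la mu.
                      content c < content d \<longrightarrow> \<omega> (Inl d) < \<omega> (Inl c)"
    and natural: "\<forall>x\<in>Inr ` H. \<forall>y\<in>mob_carrier (skew la mu) H.
                    covers (mob_carrier (skew la mu) H) (mob_le hle att) x y \<longrightarrow> \<omega> x < \<omega> y"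
begin

abbreviation "P \<equiv> mob_carrier S H"
abbreviation "le \<equiv> mob_le hle att"
abbreviation "corners \<equiv> inner_corners la mu"

lemma finite_H: "finite H"
  and att_in_skew: "\<And>b. b \<in> H \<Longrightarrow> att b \<in> S"
  and att_eq: "\<And>b b'. b \<in> H \<Longrightarrow> b' \<in> H \<Longrightarrow> hle b b' \<Longrightarrow> att b = att b'"
  and H_poset: "poset_on H hle"
  using mobile unfolding mobile_data_def by blast+

lemma mem_P_iff: "x \<in> P \<longleftrightarrow> (case x of Inl c \<Rightarrow> c \<in> S | Inr b \<Rightarrow> b \<in> H)"
  unfolding mob_carrier_def by (cases x) auto

lemma finite_P: "finite P"
  unfolding mob_carrier_def using finite_skew finite_H by simp

lemma corner_in_P: "u \<in> corners \<Longrightarrow> Inl u \<in> P"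
  using inner_corner_in_skew unfolding mob_carrier_def by auto

lemma cell_of_in_skew: "x \<in> P \<Longrightarrow> cell_of att x \<in> S"
  using att_in_skew unfolding mem_P_iff by (cases x) auto

lemma le_Inl_cell_of: "x \<in> P \<Longrightarrow> le x (Inl (cell_of att x))"
  by (cases x) auto

lemma le_imp_bs_le_cell_of: "x \<in> P \<Longrightarrow> y \<in> P \<Longrightarrow> le x y \<Longrightarrow> bs_le (cell_of att x) (cell_of att y)"
  using att_eq unfolding mem_P_iff by (cases x; cases y) auto

lemma le_Inr_imp: "x \<in> P \<Longrightarrow> b \<in> H \<Longrightarrow> le x (Inr b) \<Longrightarrow> \<exists>b'. x = Inr b' \<and> att b' = att b"
  using att_eq unfolding mem_P_iff by (cases x) auto

text \<open>Naturality gives increasing labels along covers inside a hanging poset and from its top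
  to the cell it hangs from; chaining covers upwards reaches that cell.\<close>
lemma label_hanging_less_attachment:
  assumes "b \<in> H"
  shows "\<omega> (Inr b) < \<omega> (Inl (att b))"
  using assms
proof (induction b rule: measure_induct_rule[where f = "\<lambda>b. card {v\<in>H. hle b v}"])
  case (less b)
  note h = poset_onD[OF H_poset]
  have "Inr b \<in> P" "Inl (att b) \<in> P" "le (Inr b) (Inl (att b))"
    using less.prems att_in_skew unfolding mob_carrier_def by auto
  then obtain z where z: "z \<in> P" "covers P le (Inr b) z" "le z (Inl (att b))"
    using finite_poset_exists_cover[OF finite_P poset_on_mob_carrier[OF mobile]] by blast
  have "\<omega> (Inr b) < \<omega> z"
    using natural z less.prems by blast
  moreover have "\<omega> z \<le> \<omega> (Inl (att b))"
  proof (cases z)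
    case (Inl c)
    then have "c = att b" using z unfolding covers_def by (auto intro: bs_le_antisym)
    then show ?thesis using Inl by simp
  next
    case (Inr b')
    then have b': "b' \<in> H" "hle b b'" "b' \<noteq> b"
      using z unfolding covers_def mob_carrier_def by auto
    have "{v\<in>H. hle b' v} \<subset> {v\<in>H. hle b v}"
      using b' less.prems h(1)[of b] h(2)[of b b'] h(3)[of b b'] by auto
    then have "card {v\<in>H. hle b' v} < card {v\<in>H. hle b v}"
      using finite_H by (simp add: psubset_card_mono)
    then have "\<omega> (Inr b') < \<omega> (Inl (att b'))"
      using less.IH b'(1) by blast
    then show ?thesis
      using Inr att_eq[OF less.prems b'(1,2)] by simp
  qed
  ultimately show ?case by simp
qed

definition left_part :: "nat \<times> nat \<Rightarrow> ((nat \<times> nat) + 'b) set" where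
  "left_part u = Inl ` {c \<in> S. content c < content u} \<union> Inr ` {b \<in> H. content (att b) < content u}"

lemma mem_left_part_iff: "x \<in> left_part u \<longleftrightarrow> x \<in> P \<and> content (cell_of att x) < content u"
  unfolding left_part_def mob_carrier_def by (cases x) auto

lemma left_part_subset: "left_part u \<subseteq> P - {Inl u}"
  by (auto simp: mem_left_part_iff)

lemma left_part_incomparable:
  assumes u: "u \<in> corners" and x: "x \<in> left_part u" and y: "y \<in> P" "y \<noteq> Inl u" "y \<notin> left_part u"
  shows "\<not> le x y \<and> \<not> le y x"
proof -
  have xP: "x \<in> P" and cx: "content (cell_of att x) < content u"
    using x mem_left_part_iff by auto
  have cy: "content u \<le> content (cell_of att y)" using y mem_left_part_iff by auto
  have uS: "u \<in> S" using inner_corner_in_skew[OF u] .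
  have cxS: "cell_of att x \<in> S" and cyS: "cell_of att y \<in> S"
    using cell_of_in_skew xP y by auto
  show ?thesis
  proof (cases "content (cell_of att y) = content u")
    case True
    then have cyu: "cell_of att y = u" using content_inj_on_skew[OF cyS uS] by simp
    obtain b where yb: "y = Inr b" "b \<in> H"
      using y cyu unfolding mem_P_iff by (cases y) auto
    show ?thesis
    proof (intro conjI notI)
      assume "le x y"
      then obtain b' where "x = Inr b'" "att b' = att b" using le_Inr_imp[OF xP yb(2)] yb by blast
      then show False using cx cyu yb by simp
    next
      assume "le y x"
      then have "bs_le u (cell_of att x)" using le_imp_bs_le_cell_of[OF y(1) xP] cyu by simp
      then show False using inner_corner_maximal[OF u cxS] cx by simp
    qed
  next
    case False
    then have "content u < content (cell_of att y)" using cy by simp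
    then show ?thesis
      using incomparable_across_inner_corner[OF u cxS cyS cx] le_imp_bs_le_cell_of xP y(1) by blast
  qed
qed

lemma corner_maximal_in_P: "u \<in> corners \<Longrightarrow> y \<in> P \<Longrightarrow> le (Inl u) y \<Longrightarrow> y = Inl u"
  using inner_corner_maximal unfolding mem_P_iff by (cases y) auto

lemma label_less_corner:
  assumes u: "u \<in> corners" and x: "x \<in> P" "x \<noteq> Inl u" "x \<notin> left_part u"
  shows "\<omega> x < \<omega> (Inl u)"
proof -
  have uS: "u \<in> S" using inner_corner_in_skew[OF u] .
  have cx: "content u \<le> content (cell_of att x)" using x mem_left_part_iff by auto
  show ?thesis
  proof (cases x)
    case (Inl c)
    then have "c \<in> S" "c \<noteq> u" using x unfolding mem_P_iff by auto
    then have "content u < content c"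
      using cx Inl content_inj_on_skew[OF _ uS] by fastforce
    then show ?thesis using rev_schur \<open>c \<in> S\<close> uS Inl by auto
  next
    case (Inr b)
    then have b: "b \<in> H" using x unfolding mem_P_iff by auto
    have "\<omega> (Inl (att b)) \<le> \<omega> (Inl u)"
    proof (cases "att b = u")
      case False
      then have "content u < content (att b)"
        using cx Inr content_inj_on_skew[OF att_in_skew[OF b] uS] by fastforce
      then show ?thesis using rev_schur att_in_skew[OF b] uS by fastforce
    qed simp
    then show ?thesis using label_hanging_less_attachment[OF b] Inr by simp
  qed
qed

lemma exists_zero_corner_above:
  assumes f: "f \<in> P_partitions P le \<omega>" and x: "x \<in> P" and "f x = 0"
  shows "\<exists>v\<in>corners. f (Inl v) = 0 \<and> bs_le (cell_of att x) v"
proof -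
  have cS: "cell_of att x \<in> S" using cell_of_in_skew[OF x] .
  obtain v where v: "v \<in> corners" "bs_le (cell_of att x) v"
    using exists_inner_corner_above[OF la_partition mu_partition cS] by blast
  have P: "Inl v \<in> P" "Inl (cell_of att x) \<in> P"
    using corner_in_P[OF v(1)] cS unfolding mob_carrier_def by auto
  have "f (Inl (cell_of att x)) \<le> f x"
    using P_partitionsD(1)[OF f x P(2) le_Inl_cell_of[OF x]] .
  moreover have "f (Inl v) \<le> f (Inl (cell_of att x))"
    using P_partitionsD(1)[OF f P(2) P(1)] v(2) by simp
  ultimately show ?thesis using v \<open>f x = 0\<close> by auto
qed

definition first_zero_at :: "nat \<times> nat \<Rightarrow> ((nat \<times> nat) + 'b \<Rightarrow> nat) set" where
  "first_zero_at u = {f \<in> P_partitions P le \<omega>. f (Inl u) = 0 \<and>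
     (\<forall>v\<in>corners. f (Inl v) = 0 \<longrightarrow> content u \<le> content v)}"

text \<open>A zero of f on P_{\<lambda>/\<nu>_1} would propagate up to a zero inner corner, which by the
  choice of u and the incomparability across u must be u itself; but the reversed Schur
  labelling makes f drop strictly from that cell to u.\<close>
lemma left_part_positive:
  assumes u: "u \<in> corners" and "f \<in> first_zero_at u" and x: "x \<in> left_part u"
  shows "1 \<le> f x"
proof (rule ccontr)
  have f: "f \<in> P_partitions P le \<omega>" and "f (Inl u) = 0"
    and first: "\<forall>v\<in>corners. f (Inl v) = 0 \<longrightarrow> content u \<le> content v"
    using \<open>f \<in> first_zero_at u\<close> unfolding first_zero_at_def by auto
  assume "\<not> 1 \<le> f x"
  then have fx: "f x = 0" by simp
  have xP: "x \<in> P" and cx: "content (cell_of att x) < content u"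
    using x mem_left_part_iff by auto
  let ?a = "cell_of att x"
  have aS: "?a \<in> S" using cell_of_in_skew[OF xP] .
  have uS: "u \<in> S" using inner_corner_in_skew[OF u] .
  obtain v where v: "v \<in> corners" "f (Inl v) = 0" "bs_le ?a v"
    using exists_zero_corner_above[OF f xP fx] by blast
  have vS: "v \<in> S" using inner_corner_in_skew[OF v(1)] .
  have "content u \<le> content v" using first v by blast
  then consider "v = u" | "content u < content v"
    using content_inj_on_skew[OF vS uS] by fastforce
  then show False
  proof cases
    case 1
    have aP: "Inl ?a \<in> P" and uP: "Inl u \<in> P" using aS uS unfolding mob_carrier_def by auto
    have "\<omega> (Inl u) < \<omega> (Inl ?a)" using rev_schur aS uS cx by auto
    then have "f (Inl u) < f (Inl ?a)" using P_partitionsD(2)[OF f aP uP] v(3) 1 by simp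
    moreover have "f (Inl ?a) \<le> f x" using P_partitionsD(1)[OF f xP aP le_Inl_cell_of[OF xP]] .
    ultimately show False using fx by simp
  next
    case 2
    then show False using incomparable_across_inner_corner[OF u aS vS cx] v(3) by blast
  qed
qed

end

section \<open>Removing an inner corner\<close>

context mobile_poset
begin

definition raise :: "nat \<times> nat \<Rightarrow> ((nat \<times> nat) + 'b \<Rightarrow> nat) \<Rightarrow> (nat \<times> nat) + 'b \<Rightarrow> nat" where
  "raise u f = (\<lambda>x. if x \<in> P - {Inl u} then (if x \<in> left_part u then f x + 1 else f x) else 0)"

definition lower :: "nat \<times> nat \<Rightarrow> ((nat \<times> nat) + 'b \<Rightarrow> nat) \<Rightarrow> (nat \<times> nat) + 'b \<Rightarrow> nat" where
  "lower u f = (\<lambda>x. if x \<in> P - {Inl u} then (if x \<in> left_part u then f x - 1 else f x) else 0)"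

lemma raise_in_P_partitions:
  assumes u: "u \<in> corners" and f: "f \<in> P_partitions (P - {Inl u}) le \<omega>"
  shows "raise u f \<in> P_partitions P le \<omega>"
  unfolding P_partitions_def
proof (intro CollectI conjI allI impI ballI)
  fix x y assume x: "x \<in> P" and y: "y \<in> P" and le: "le x y"
  have "raise u f y \<le> raise u f x \<and> (\<omega> y < \<omega> x \<longrightarrow> raise u f y < raise u f x)"
  proof (cases "x = Inl u")
    case True
    then have "y = Inl u" using corner_maximal_in_P[OF u y] le by simp
    then show ?thesis using True by simp
  next
    case xne: False
    show ?thesis
    proof (cases "y = Inl u")
      case True
      have "0 < raise u f x" if "\<omega> y < \<omega> x"
      proof (cases "x \<in> left_part u")
        case False
        then have "\<omega> x < \<omega> y" using label_less_corner[OF u x xne False] True by simp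
        then show ?thesis using that by simp
      qed (simp add: raise_def x xne)
      then show ?thesis using True unfolding raise_def by simp
    next
      case yne: False
      have "f y \<le> f x" "\<omega> y < \<omega> x \<longrightarrow> f y < f x"
        using P_partitionsD[OF f _ _ le] x y xne yne by auto
      moreover have "x \<in> left_part u \<longleftrightarrow> y \<in> left_part u"
        using left_part_incomparable[OF u _ y yne] left_part_incomparable[OF u _ x xne] le by blast
      ultimately show ?thesis unfolding raise_def using x y xne yne by auto
    qed
  qed
  then show "raise u f y \<le> raise u f x" "\<omega> y < \<omega> x \<Longrightarrow> raise u f y < raise u f x"
    by auto
qed (simp add: raise_def)

lemma lower_in_P_partitions:
  assumes u: "u \<in> corners" and "f \<in> first_zero_at u"
  shows "lower u f \<in> P_partitions (P - {Inl u}) le \<omega>"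
  unfolding P_partitions_def
proof (intro CollectI conjI allI impI ballI)
  have f: "f \<in> P_partitions P le \<omega>"
    using \<open>f \<in> first_zero_at u\<close> unfolding first_zero_at_def by auto
  have pos: "\<forall>x\<in>left_part u. 1 \<le> f x"
    using left_part_positive[OF u \<open>f \<in> first_zero_at u\<close>] by blast
  fix x y assume x: "x \<in> P - {Inl u}" and y: "y \<in> P - {Inl u}" and le: "le x y"
  have "f y \<le> f x" "\<omega> y < \<omega> x \<longrightarrow> f y < f x"
    using P_partitionsD[OF f _ _ le] x y by auto
  moreover have "x \<in> left_part u \<longleftrightarrow> y \<in> left_part u"
    using left_part_incomparable[OF u _, of x y] left_part_incomparable[OF u _, of y x] x y le by blast
  ultimately have "lower u f y \<le> lower u f x \<and> (\<omega> y < \<omega> x \<longrightarrow> lower u f y < lower u f x)"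
    using pos x y unfolding lower_def by (cases "x \<in> left_part u") (auto simp: le_diff_iff)
  then show "lower u f y \<le> lower u f x" "\<omega> y < \<omega> x \<Longrightarrow> lower u f y < lower u f x"
    by auto
qed (auto simp: lower_def)

lemma sum_raise:
  assumes "u \<in> corners"
  shows "sum (raise u f) P = card (left_part u) + sum f (P - {Inl u})"
proof -
  have "sum (raise u f) P = raise u f (Inl u) + sum (raise u f) (P - {Inl u})"
    using corner_in_P[OF assms] finite_P by (simp add: sum.remove)
  also have "\<dots> = (\<Sum>x\<in>P - {Inl u}. f x + (if x \<in> left_part u then 1 else 0))"
    by (simp add: raise_def) (rule sum.cong, auto)
  also have "\<dots> = sum f (P - {Inl u}) + (\<Sum>x\<in>P - {Inl u}. if x \<in> left_part u then 1 else 0)"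
    by (rule sum.distrib)
  also have "(\<Sum>x\<in>P - {Inl u}. if x \<in> left_part u then 1 else 0) = card {x\<in>P - {Inl u}. x \<in> left_part u}"
    by (rule card_filter_eq_sum[symmetric]) (use finite_P in simp)
  also have "{x\<in>P - {Inl u}. x \<in> left_part u} = left_part u"
    using left_part_subset by blast
  finally show ?thesis by simp
qed

lemma lower_raise:
  assumes "f \<in> P_partitions (P - {Inl u}) le \<omega>"
  shows "lower u (raise u f) = f"
  using P_partitions_zero_outside[OF assms] by (auto simp: fun_eq_iff lower_def raise_def)

lemma raise_lower:
  assumes u: "u \<in> corners" and f: "f \<in> first_zero_at u"
  shows "raise u (lower u f) = f"
proof
  fix x
  have "f x = 0" if "x \<notin> P - {Inl u}"
    using f that P_partitions_zero_outside[of f P] unfolding first_zero_at_def by auto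
  moreover have "1 \<le> f x" if "x \<in> left_part u"
    using left_part_positive[OF u f that] .
  ultimately show "raise u (lower u f) x = f x"
    using left_part_subset by (auto simp: lower_def raise_def)
qed

lemma raise_in_first_zero_at:
  assumes u: "u \<in> corners" and f: "f \<in> P_partitions (P - {Inl u}) le \<omega>"
  shows "raise u f \<in> first_zero_at u"
proof -
  have "content u \<le> content v" if v: "v \<in> corners" "raise u f (Inl v) = 0" for v
  proof (rule ccontr)
    assume "\<not> content u \<le> content v"
    then have "Inl v \<in> left_part u" "Inl v \<noteq> Inl u"
      using corner_in_P[OF v(1)] by (auto simp: mem_left_part_iff)
    then show False using v(2) corner_in_P[OF v(1)] by (simp add: raise_def)
  qed
  moreover have "raise u f (Inl u) = 0" by (simp add: raise_def)
  ultimately show ?thesis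
    unfolding first_zero_at_def using raise_in_P_partitions[OF u f] by blast
qed

lemma bij_betw_raise:
  assumes "u \<in> corners"
  shows "bij_betw (raise u) (P_partitions (P - {Inl u}) le \<omega>) (first_zero_at u)"
proof (rule bij_betw_byWitness[where f' = "lower u"])
  show "\<forall>f\<in>P_partitions (P - {Inl u}) le \<omega>. lower u (raise u f) = f"
    using lower_raise by blast
  show "\<forall>f\<in>first_zero_at u. raise u (lower u f) = f"
    using raise_lower[OF assms] by blast
  show "raise u ` P_partitions (P - {Inl u}) le \<omega> \<subseteq> first_zero_at u"
    using raise_in_first_zero_at[OF assms] by blast
  show "lower u ` first_zero_at u \<subseteq> P_partitions (P - {Inl u}) le \<omega>"
    using lower_in_P_partitions[OF assms] by blast
qed

lemma zero_partitions_eq_UN: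
  "{f \<in> P_partitions P le \<omega>. \<exists>x\<in>P. f x = 0} = (\<Union>u\<in>corners. first_zero_at u)"
proof (intro equalityI subsetI)
  fix f assume "f \<in> {f \<in> P_partitions P le \<omega>. \<exists>x\<in>P. f x = 0}"
  then obtain x where f: "f \<in> P_partitions P le \<omega>" and x: "x \<in> P" "f x = 0" by blast
  let ?Z = "{v\<in>corners. f (Inl v) = 0}"
  have fin: "finite (content ` ?Z)" using finite_inner_corners by simp
  have "?Z \<noteq> {}" using exists_zero_corner_above[OF f x] by blast
  then have "Min (content ` ?Z) \<in> content ` ?Z" using fin by (intro Min_in) auto
  then obtain u where u: "u \<in> ?Z" "content u = Min (content ` ?Z)" by auto
  have "content u \<le> content v" if "v \<in> ?Z" for v
    using u(2) fin that by simp
  then have "f \<in> first_zero_at u"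
    unfolding first_zero_at_def using f u(1) by blast
  then show "f \<in> (\<Union>u\<in>corners. first_zero_at u)" using u(1) by blast
next
  fix f assume "f \<in> (\<Union>u\<in>corners. first_zero_at u)"
  then obtain u where "u \<in> corners" "f \<in> first_zero_at u" by blast
  then show "f \<in> {f \<in> P_partitions P le \<omega>. \<exists>x\<in>P. f x = 0}"
    unfolding first_zero_at_def using corner_in_P by blast
qed

lemma first_zero_at_disjoint:
  assumes "u \<in> corners" "u' \<in> corners" "u \<noteq> u'"
  shows "first_zero_at u \<inter> first_zero_at u' = {}"
proof (rule ccontr)
  assume "first_zero_at u \<inter> first_zero_at u' \<noteq> {}"
  then obtain f where "f \<in> first_zero_at u" "f \<in> first_zero_at u'" by blast
  then have "content u \<le> content u'" "content u' \<le> content u"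
    using assms(1,2) unfolding first_zero_at_def by blast+
  then show False
    using content_inj_on_skew[OF inner_corner_in_skew inner_corner_in_skew] assms by fastforce
qed

lemma card_zero_partitions_with_sum:
  "card {f \<in> P_partitions P le \<omega>. sum f P = N \<and> (\<exists>x\<in>P. f x = 0)} =
    (\<Sum>u\<in>corners. card {g \<in> P_partitions (P - {Inl u}) le \<omega>. card (left_part u) + sum g (P - {Inl u}) = N})"
proof -
  let ?F = "\<lambda>u. {f \<in> first_zero_at u. sum f P = N}"
  have "{f \<in> P_partitions P le \<omega>. sum f P = N \<and> (\<exists>x\<in>P. f x = 0)} = (\<Union>u\<in>corners. ?F u)"
    using zero_partitions_eq_UN by blast
  then have "card {f \<in> P_partitions P le \<omega>. sum f P = N \<and> (\<exists>x\<in>P. f x = 0)} = card (\<Union>u\<in>corners. ?F u)"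
    by simp
  also have "\<dots> = (\<Sum>u\<in>corners. card (?F u))"
  proof (rule card_UN_disjoint[OF finite_inner_corners])
    show "\<forall>u\<in>corners. finite (?F u)"
    proof
      fix u
      have "?F u \<subseteq> {f \<in> P_partitions P le \<omega>. sum f P = N}"
        unfolding first_zero_at_def by blast
      then show "finite (?F u)"
        using finite_P_partitions_with_sum[OF finite_P] by (rule finite_subset)
    qed
    show "\<forall>u\<in>corners. \<forall>u'\<in>corners. u \<noteq> u' \<longrightarrow> ?F u \<inter> ?F u' = {}"
      using first_zero_at_disjoint by blast
  qed
  also have "\<dots> = (\<Sum>u\<in>corners. card {g \<in> P_partitions (P - {Inl u}) le \<omega>. card (left_part u) + sum g (P - {Inl u}) = N})"
  proof (intro sum.cong refl)
    fix u assume u: "u \<in> corners"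
    have "bij_betw (raise u) {g \<in> P_partitions (P - {Inl u}) le \<omega>. card (left_part u) + sum g (P - {Inl u}) = N} (?F u)"
      using sum_raise[OF u] by (intro bij_betw_Collect[OF bij_betw_raise[OF u]]) simp
    then show "card (?F u) = card {g \<in> P_partitions (P - {Inl u}) le \<omega>. card (left_part u) + sum g (P - {Inl u}) = N}"
      by (simp add: bij_betw_same_card)
  qed
  finally show ?thesis .
qed

lemma card_P_pos: "0 < card P"
  using skew_nonempty finite_P unfolding mob_carrier_def by (auto simp: card_gt_0_iff)

lemma shifted_counts_remove_inner_corners:
  assumes m: "card P = Suc m"
  shows "(\<Sum>g\<in>lin_exts P le. shifted_count m (maj_of P \<omega> g) N) =
    (\<Sum>u\<in>corners. \<Sum>g\<in>lin_exts (P - {Inl u}) le.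
       shifted_count m (card (left_part u) + maj_of (P - {Inl u}) \<omega> g) N)"
proof -
  interpret finite_labelling P \<omega>
    using finite_P inj by unfold_locales
  have labelling: "finite_labelling (P - {Inl u}) \<omega>" for u
    using finite_P inj by unfold_locales (auto intro: inj_on_subset)
  have card_minus: "card (P - {Inl u}) = m" if "u \<in> corners" for u
    using corner_in_P[OF that] finite_P m by simp
  have "(\<Sum>g\<in>lin_exts P le. shifted_count m (maj_of P \<omega> g) N) =
      card {f \<in> P_partitions P le \<omega>. sum f P = N \<and> (\<exists>x\<in>P. f x = 0)}"
    using card_P_partitions_with_zero[OF m] by simp
  also have "\<dots> = (\<Sum>u\<in>corners. \<Sum>g\<in>lin_exts (P - {Inl u}) le.
       shifted_count m (card (left_part u) + maj_of (P - {Inl u}) \<omega> g) N)"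
    unfolding card_zero_partitions_with_sum
    using finite_labelling.card_P_partitions_offset[OF labelling] card_minus by simp
  finally show ?thesis .
qed

theorem emaj_remove_inner_corners:
  "emaj P le \<omega> q = (\<Sum>u\<in>corners. q ^ card (left_part u) * emaj (P - {Inl u}) le \<omega> q)"
proof -
  obtain m where m: "card P = Suc m" using card_P_pos gr0_implies_Suc by blast
  have fin: "\<forall>u\<in>corners. finite (lin_exts (P - {Inl u}) le)"
    using finite_lin_exts finite_P by blast
  let ?Y = "SIGMA u:corners. lin_exts (P - {Inl u}) le"
  let ?\<beta> = "\<lambda>(u, g). card (left_part u) + maj_of (P - {Inl u}) \<omega> g"
  have "finite ?Y"
    by (rule finite_SigmaI[OF finite_inner_corners]) (use fin in blast)
  moreover have "(\<Sum>g\<in>lin_exts P le. shifted_count m (maj_of P \<omega> g) N) = (\<Sum>y\<in>?Y. shifted_count m (?\<beta> y) N)" for N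
    unfolding shifted_counts_remove_inner_corners[OF m]
    by (subst sum.Sigma[OF finite_inner_corners fin]) (simp add: case_prod_beta)
  ultimately have "(\<Sum>g\<in>lin_exts P le. q ^ maj_of P \<omega> g) = (\<Sum>y\<in>?Y. q ^ ?\<beta> y)"
    by (intro sum_power_eq_if_shifted_counts_eq[OF finite_lin_exts[OF finite_P]])
  also have "\<dots> = (\<Sum>u\<in>corners. \<Sum>g\<in>lin_exts (P - {Inl u}) le.
      q ^ card (left_part u) * q ^ maj_of (P - {Inl u}) \<omega> g)"
    by (subst sum.Sigma[OF finite_inner_corners fin]) (simp add: case_prod_beta power_add)
  finally show ?thesis
    by (simp add: emaj_def sum_distrib_left)
qed

end

theorem lemma4p2:
  fixes la mu :: "nat list"
    and H :: "'b set" and hle :: "'b \<Rightarrow> 'b \<Rightarrow> bool" and att :: "'b \<Rightarrow> nat \<times> nat"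
    and \<omega> :: "(nat \<times> nat) + 'b \<Rightarrow> int"
    and q :: "'c::comm_semiring_1"
  assumes strip: "border_strip la mu"
    and mobile: "mobile_data (skew la mu) H hle att"
    and inj: "inj_on \<omega> (mob_carrier (skew la mu) H)"
    and rev_schur: "\<forall>c\<in>skew la mu. \<forall>d\<in>skew la mu.
                      content c < content d \<longrightarrow> \<omega> (Inl d) < \<omega> (Inl c)"
    and natural: "\<forall>x\<in>Inr ` H. \<forall>y\<in>mob_carrier (skew la mu) H.
                    covers (mob_carrier (skew la mu) H) (mob_le hle att) x y \<longrightarrow> \<omega> x < \<omega> y"
  shows "emaj (mob_carrier (skew la mu) H) (mob_le hle att) \<omega> q =
    (\<Sum>u\<in>inner_corners la mu.
       q ^ card (Inl ` {c \<in> skew la mu. content c < content u} \<union>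
                 Inr ` {b \<in> H. content (att b) < content u})
       * emaj (mob_carrier (skew la mu) H - {Inl u}) (mob_le hle att) \<omega> q)"
proof -
  interpret mobile_poset la mu H hle att \<omega>
    by unfold_locales (fact assms)+
  show ?thesis
    using emaj_remove_inner_corners[of q] unfolding left_part_def .
qed

end
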